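(* Under Assumptions 1–3 (see context), there exist a real $d\times d$ symmetric positive definite matrix $M$ and a constant $\delta_0>0$ such that: (i) if $y$ is a solution of $dy/dt=F(y)$ with $\|y(0)-c\|_M\le\delta_0$, then for all $t\ge0$, $\frac{d}{dt}\|y(t)-c\|_M\le-\rho\|y(t)-c\|_M$; (ii) if $y,z$ are two solutions of $dy/dt=F(y)$ with $\|y(0)-c\|_M\le\delta_0$ and $\|z(0)-c\|_M\le\delta_0$, then for all $t\ge0$, $\frac d{dt}\|y(t)-z(t)\|_M\le-\rho\|y(t)-z(t)\|_M$. Moreover, there exist $K_1,K_2\in\mathbb R$ such that, whenever $N$ is sufficiently large: (iii) for all $X\in S_N$ with $\delta_0\ge G(N^{-1}X)\ge K_1N^{-1/2}$, $\mathcal Q^NG(N^{-1}X)\le-\rho G(N^{-1}X)$; (iv) there is a Markovian coupling $(U^N,V^N)$ of two copies of $X^N$, whose generator $\mathcal A^N$ satisfies $\mathcal A^NH(U,V)\le-\rho H(U,V)$ for all $U,V\in S_N\cap B_M(Nc,N\delta_0)$ with $H(U,V)\ge K_2$.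
   Context: Setting: for each $N$, $X^N$ is a pure jump Markov process on $S_N\subseteq\mathbb Z^d$ with $N^{-1}S_N\subseteq\hat S$, $\hat S\subseteq\mathbb R^d$ closed. Assumption 1: finite $\mathcal J\subset\mathbb Z^d$ and continuously differentiable $r_J:\hat S\to[0,\infty)$, only transitions $X\to X+J$ at rate $Nr_J(N^{-1}X)$. Assumption 2: every vector of $\mathbb Z^d$ is a finite sum of elements of $\mathcal J$. $F(y)=\sum_JJr_J(y)$. Assumption 3: there is $c$ in the interior of $\hat S$ with $F(c)=0$, $r_J(c)>0$ for all $J$, and $\rho>0$ such that all eigenvalues of $A=\sum_JJ\nabla r_J(c)$ have real part $<-\rho$. Notation: $\|x\|_M=(x^TMx)^{1/2}$, $B_M(z,\epsilon)=\{x:\|x-z\|_M\le\epsilon\}$, $H(z,w)=\|z-w\|_M$, $G(z)=H(z,c)$; $\mathcal Q^N$ is the generator of $x^N=N^{-1}X^N$, i.e. $\mathcal Q^Ng(x)=\sum_JNr_J(x)(g(x+J/N)-g(x))$. *)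

theory Defs
  imports "HOL-Analysis.Analysis"
begin

definition ivec :: "int^'d \<Rightarrow> real^'d" where
  "ivec J = (\<chi> i. real_of_int (J $ i))"

definition drift :: "(int^'d) set \<Rightarrow> (int^'d \<Rightarrow> real^'d \<Rightarrow> real) \<Rightarrow> real^'d \<Rightarrow> real^'d" where
  "drift Js r y = (\<Sum>J\<in>Js. r J y *\<^sub>R ivec J)"

text \<open>A = sum_J J (grad r_J(c))^T, entry (i,k) = sum_J J_i d_k r_J(c).\<close>
definition matA :: "(int^'d) set \<Rightarrow> (int^'d \<Rightarrow> real^'d \<Rightarrow> real^'d) \<Rightarrow> real^'d \<Rightarrow> real^'d^'d" where
  "matA Js g c = (\<chi> i k. \<Sum>J\<in>Js. real_of_int (J $ i) * (g J c) $ k)"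

definition complex_eigenvalue :: "real^'d^'d \<Rightarrow> complex \<Rightarrow> bool" where
  "complex_eigenvalue A lam \<longleftrightarrow>
     (\<exists>v::complex^'d. v \<noteq> 0 \<and> (\<chi> i j. complex_of_real (A $ i $ j)) *v v = lam *s v)"

definition sym_pos_def :: "real^'d^'d \<Rightarrow> bool" where
  "sym_pos_def M \<longleftrightarrow> transpose M = M \<and> (\<forall>x. x \<noteq> 0 \<longrightarrow> x \<bullet> (M *v x) > 0)"

definition normM :: "real^'d^'d \<Rightarrow> real^'d \<Rightarrow> real" where
  "normM M x = sqrt (x \<bullet> (M *v x))"

definition genQ :: "(int^'d) set \<Rightarrow> (int^'d \<Rightarrow> real^'d \<Rightarrow> real) \<Rightarrow> nat \<Rightarrow> (real^'d \<Rightarrow> real) \<Rightarrow> real^'d \<Rightarrow> real" where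
  "genQ Js r N f x = (\<Sum>J\<in>Js. real N * r J x * (f (x + (1 / real N) *\<^sub>R ivec J) - f x))"

definition rateX :: "(int^'d) set \<Rightarrow> (int^'d \<Rightarrow> real^'d \<Rightarrow> real) \<Rightarrow> nat \<Rightarrow> int^'d \<Rightarrow> int^'d \<Rightarrow> real" where
  "rateX Js r N X X' = (\<Sum>J\<in>{J\<in>Js. J \<noteq> 0 \<and> X + J = X'}. real N * r J ((1 / real N) *\<^sub>R ivec X))"

text \<open>A Markovian coupling of two copies of X^N on S_N x S_N, given by its
  jump-rate kernel cq (finitely many jumps from each state), whose two
  marginal jump rates coincide with those of X^N.\<close>
definition is_markov_coupling ::
  "(int^'d) set \<Rightarrow> (int^'d \<Rightarrow> real^'d \<Rightarrow> real) \<Rightarrow> nat \<Rightarrow> (int^'d) set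
   \<Rightarrow> ((int^'d) \<times> (int^'d) \<Rightarrow> (int^'d) \<times> (int^'d) \<Rightarrow> real) \<Rightarrow> bool" where
  "is_markov_coupling Js r N SN cq \<longleftrightarrow>
     (\<forall>p q. cq p q \<ge> 0) \<and> (\<forall>p. finite {q. cq p q \<noteq> 0}) \<and>
     (\<forall>U\<in>SN. \<forall>V\<in>SN. \<forall>U'. U' \<noteq> U \<longrightarrow>
        (\<Sum>q\<in>{q. cq (U,V) q \<noteq> 0 \<and> fst q = U'}. cq (U,V) q) = rateX Js r N U U') \<and>
     (\<forall>U\<in>SN. \<forall>V\<in>SN. \<forall>V'. V' \<noteq> V \<longrightarrow>
        (\<Sum>q\<in>{q. cq (U,V) q \<noteq> 0 \<and> snd q = V'}. cq (U,V) q) = rateX Js r N V V')"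

definition genA :: "((int^'d) \<times> (int^'d) \<Rightarrow> (int^'d) \<times> (int^'d) \<Rightarrow> real)
     \<Rightarrow> ((int^'d) \<times> (int^'d) \<Rightarrow> real) \<Rightarrow> (int^'d) \<times> (int^'d) \<Rightarrow> real" where
  "genA cq f p = (\<Sum>q\<in>{q. cq p q \<noteq> 0}. cq p q * (f q - f p))"

end

(* Since every eigenvalue of A has real part below -rho, conjugating a complex Schur form of A
   by diag(1, eps, eps^2, ...) makes its strictly upper triangular part as small as we like, and
   the Gram matrix M of the rescaled Schur coordinates is a Lyapunov matrix:
   x^T M A x <= -rho1 |x|_M^2 for some rho1 > rho. Continuity of the rate gradients then makes
   the drift F contracting in the M-inner product on a ball around c,
   (x - y)^T M (F x - F y) <= -rho2 |x - y|_M^2 with rho < rho2 < rho1. This gives (i) and (ii):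
   M-balls around c are forward invariant, and d/dt |y - z|_M^2 <= -2 rho2 |y - z|_M^2, where
   |y - z|_M vanishes at one time only if it vanishes identically (Gronwall).
   For the jump chains, concavity of the square root bounds each jump increment of |.|_M by a
   first-order term, which sums up to the drift estimate, plus a second-order error. For Q^N G
   this error is of order 1/(N G); for the coupling in which both copies make the jump J
   together at the smaller of their two rates (which leaves U - V unchanged) it is of order
   Lip(r) |U - V| / H, hence bounded. Both are absorbed by the slack rho2 - rho as soon as
   G >= K1 / sqrt N, resp. H >= K2. *)

theory Submission
  imports Defs "Jordan_Normal_Form.Schur_Decomposition"
begin

section \<open>A Lyapunov matrix from a Schur triangularisation\<close>

lemma complex_schur_triangularization:
  fixes A :: "complex mat"
  assumes A: "A \<in> carrier_mat n n"
  obtains B Q where "B \<in> carrier_mat n n" "Q \<in> carrier_mat n n" "upper_triangular B"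
    "\<And>i. i < n \<Longrightarrow> eigenvalue A (B $$ (i, i))" "Q * A = B * Q"
    "\<And>v. v \<in> carrier_vec n \<Longrightarrow> Q *\<^sub>v v = 0\<^sub>v n \<Longrightarrow> v = 0\<^sub>v n"
proof -
  obtain es where cp: "char_poly A = (\<Prod>a\<leftarrow>es. [:-a, 1:])" "length es = n"
    using char_poly_factorized[OF A] by blast
  obtain B P Q where sd: "schur_decomposition A es = (B, P, Q)"
    by (cases "schur_decomposition A es") auto
  from schur_decomposition[OF A cp(1) sd] have sim: "similar_mat_wit A B P Q"
    and ut: "upper_triangular B" and dg: "diag_mat B = es" by auto
  note D = similar_mat_witD2[OF A sim]
  have "Q * A = Q * (P * (B * Q))"
    using D by (simp add: assoc_mult_mat[OF D(6,5,7)])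
  also have "\<dots> = B * Q"
    using D by (simp add: assoc_mult_mat[of Q n n P n "B * Q" n, symmetric])
  finally have QA: "Q * A = B * Q" .
  have ev: "eigenvalue A (B $$ (i, i))" if i: "i < n" for i
  proof -
    have "es ! i = B $$ (i, i)"
      unfolding dg[symmetric] using i cp(2) D(5) by (simp add: diag_mat_def)
    hence "B $$ (i, i) \<in> set es"
      using i cp(2) nth_mem by metis
    hence "poly (char_poly A) (B $$ (i, i)) = 0"
      unfolding cp(1) by (rule linear_poly_root)
    thus ?thesis using eigenvalue_root_char_poly[OF A] by simp
  qed
  have inj: "v = 0\<^sub>v n" if v: "v \<in> carrier_vec n" and Qv: "Q *\<^sub>v v = 0\<^sub>v n" for v
  proof -
    have "v = (P * Q) *\<^sub>v v" using D(1) v by simp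
    also have "\<dots> = P *\<^sub>v (Q *\<^sub>v v)" by (rule assoc_mult_mat_vec[OF D(6,7) v])
    finally show ?thesis using Qv D(6) by auto
  qed
  show ?thesis using that D(5,7) ut ev QA inj by blast
qed

definition complex_form :: "('d::finite \<Rightarrow> complex) \<Rightarrow> real^'d \<Rightarrow> complex" where
  "complex_form q x = (\<Sum>k\<in>UNIV. q k * complex_of_real (x $ k))"

lemma complex_eigenvalue_if_reindexed_eigenvalue:
  fixes A :: "real^'d::finite^'d"
  assumes \<iota>: "bij_betw \<iota> {..<CARD('d)} UNIV"
    and ev: "eigenvalue (mat CARD('d) CARD('d) (\<lambda>(i, j). complex_of_real (A $ \<iota> i $ \<iota> j))) lam"
  shows "complex_eigenvalue A lam"
proof -
  let ?n = "CARD('d)" and ?\<iota>' = "inv_into {..<CARD('d)} \<iota>"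
  let ?Ac = "mat ?n ?n (\<lambda>(i, j). complex_of_real (A $ \<iota> i $ \<iota> j))"
  have \<iota>'_less: "?\<iota>' k < ?n" for k
    using \<iota> by (metis bij_betw_def inv_into_into lessThan_iff UNIV_I)
  have \<iota>_\<iota>': "\<iota> (?\<iota>' k) = k" for k
    using \<iota> by (meson UNIV_I bij_betw_inv_into_right)
  have \<iota>'_\<iota>: "?\<iota>' (\<iota> i) = i" if "i < ?n" for i
    using \<iota> that by (simp add: bij_betw_inv_into_left)
  obtain v where v: "v \<in> carrier_vec ?n" "v \<noteq> 0\<^sub>v ?n" "?Ac *\<^sub>v v = lam \<cdot>\<^sub>v v"
    using ev unfolding eigenvalue_def eigenvector_def by auto
  define w :: "complex^'d" where "w = (\<chi> k. v $ ?\<iota>' k)"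
  have "w \<noteq> 0"
  proof
    assume "w = 0"
    hence "v $ i = 0" if "i < ?n" for i
      using that \<iota>'_\<iota> unfolding w_def by (metis vec_lambda_beta zero_index)
    with v(1,2) show False by (auto intro: eq_vecI)
  qed
  moreover have "(\<chi> a b. complex_of_real (A $ a $ b)) *v w = lam *s w"
  proof (rule iffD2[OF Finite_Cartesian_Product.vec_eq_iff], intro allI)
    fix k
    have "((\<chi> a b. complex_of_real (A $ a $ b)) *v w) $ k
        = (\<Sum>l<?n. complex_of_real (A $ \<iota> (?\<iota>' k) $ \<iota> l) * v $ l)"
      by (simp add: matrix_vector_mult_def w_def sum.reindex_bij_betw[OF \<iota>, symmetric] \<iota>'_\<iota> \<iota>_\<iota>')
    also have "\<dots> = (?Ac *\<^sub>v v) $ ?\<iota>' k"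
      using \<iota>'_less[of k] v(1)
      by (simp add: mult_mat_vec_def scalar_prod_def lessThan_atLeast0 row_def)
    finally show "((\<chi> a b. complex_of_real (A $ a $ b)) *v w) $ k = (lam *s w) $ k"
      using v \<iota>'_less[of k] by (simp add: w_def)
  qed
  ultimately show ?thesis
    unfolding complex_eigenvalue_def by blast
qed

text \<open>A Schur triangularisation Q A = B Q of a real matrix, with the rows of Q read as
  complex linear forms on real vectors.\<close>
lemma complex_schur_forms:
  fixes A :: "real^'d::finite^'d"
  obtains Q :: "nat \<Rightarrow> 'd \<Rightarrow> complex" and B :: "nat \<Rightarrow> nat \<Rightarrow> complex"
  where "\<And>i x. i < CARD('d) \<Longrightarrow>
           complex_form (Q i) (A *v x) = (\<Sum>j<CARD('d). B i j * complex_form (Q j) x)"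
    and "\<And>i j. i < CARD('d) \<Longrightarrow> j < i \<Longrightarrow> B i j = 0"
    and "\<And>i. i < CARD('d) \<Longrightarrow> complex_eigenvalue A (B i i)"
    and "\<And>x. (\<And>i. i < CARD('d) \<Longrightarrow> complex_form (Q i) x = 0) \<Longrightarrow> x = 0"
proof -
  let ?n = "CARD('d)"
  obtain \<iota> where \<iota>: "bij_betw \<iota> {..<?n} (UNIV :: 'd set)"
    using finite_same_card_bij[of "{..<?n}" "UNIV :: 'd set"] by auto
  let ?\<iota>' = "inv_into {..<?n} \<iota>"
  have \<iota>'_\<iota>: "?\<iota>' (\<iota> i) = i" if "i < ?n" for i
    using \<iota> that by (simp add: bij_betw_inv_into_left)
  have \<iota>'_less: "?\<iota>' k < ?n" for k
    using \<iota> by (metis bij_betw_def inv_into_into lessThan_iff UNIV_I)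
  have \<iota>_\<iota>': "\<iota> (?\<iota>' k) = k" for k
    using \<iota> by (meson UNIV_I bij_betw_inv_into_right)
  have reindex: "(\<Sum>k\<in>UNIV. \<phi> k) = (\<Sum>k<?n. \<phi> (\<iota> k))" for \<phi> :: "'d \<Rightarrow> complex"
    by (simp add: sum.reindex_bij_betw[OF \<iota>])
  define Ac where "Ac = mat ?n ?n (\<lambda>(i, j). complex_of_real (A $ \<iota> i $ \<iota> j))"
  have Ac: "Ac \<in> carrier_mat ?n ?n" unfolding Ac_def by simp
  obtain B Q where B: "B \<in> carrier_mat ?n ?n" and Q: "Q \<in> carrier_mat ?n ?n"
    and ut: "upper_triangular B" and ev: "\<And>i. i < ?n \<Longrightarrow> eigenvalue Ac (B $$ (i, i))"
    and QA: "Q * Ac = B * Q" and inj: "\<And>v. v \<in> carrier_vec ?n \<Longrightarrow> Q *\<^sub>v v = 0\<^sub>v ?n \<Longrightarrow> v = 0\<^sub>v ?n"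
    using complex_schur_triangularization[OF Ac] by blast
  define Qf where "Qf i k = Q $$ (i, ?\<iota>' k)" for i k
  define coords where "coords x = vec ?n (\<lambda>k. complex_of_real (x $ \<iota> k))" for x :: "real^'d"
  have coords: "coords x \<in> carrier_vec ?n" for x unfolding coords_def by simp
  have form: "complex_form (Qf i) x = (Q *\<^sub>v coords x) $ i" if "i < ?n" for i x
  proof -
    have "complex_form (Qf i) x = (\<Sum>k<?n. Q $$ (i, k) * complex_of_real (x $ \<iota> k))"
      by (simp add: complex_form_def reindex Qf_def) (intro sum.cong refl, simp add: \<iota>'_\<iota>)
    thus ?thesis using that Q
      by (simp add: coords_def mult_mat_vec_def scalar_prod_def lessThan_atLeast0 row_def)
  qed
  have coords_mult: "coords (A *v x) = Ac *\<^sub>v coords x" for x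
    by (rule eq_vecI) (simp_all add: coords_def Ac_def matrix_vector_mult_def reindex
        mult_mat_vec_def scalar_prod_def lessThan_atLeast0 row_def)
  have "complex_form (Qf i) (A *v x) = (\<Sum>j<?n. B $$ (i, j) * complex_form (Qf j) x)"
    if i: "i < ?n" for i x
  proof -
    have "Q *\<^sub>v (Ac *\<^sub>v coords x) = B *\<^sub>v (Q *\<^sub>v coords x)"
      using assoc_mult_mat_vec[OF Q Ac coords] assoc_mult_mat_vec[OF B Q coords] QA by simp
    thus ?thesis using i B Q
      by (simp add: form coords_mult mult_mat_vec_def scalar_prod_def lessThan_atLeast0 row_def)
  qed
  moreover have "B $$ (i, j) = 0" if "i < ?n" "j < i" for i j
    using ut B that unfolding upper_triangular_def by auto
  moreover have "complex_eigenvalue A (B $$ (i, i))" if "i < ?n" for i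
    using complex_eigenvalue_if_reindexed_eigenvalue[OF \<iota>] ev[OF that] unfolding Ac_def .
  moreover have "x = 0" if "\<And>i. i < ?n \<Longrightarrow> complex_form (Qf i) x = 0" for x
  proof -
    have "Q *\<^sub>v coords x = 0\<^sub>v ?n" using that form Q by (intro eq_vecI) auto
    hence "coords x = 0\<^sub>v ?n" using inj coords by blast
    hence "x $ \<iota> k = 0" if "k < ?n" for k
      using that by (metis coords_def index_vec index_zero_vec(1) of_real_eq_0_iff)
    hence "x $ k = 0" for k using \<iota>_\<iota>' \<iota>'_less by metis
    thus "x = 0" by (simp add: Finite_Cartesian_Product.vec_eq_iff)
  qed
  ultimately show ?thesis using that[of Qf "\<lambda>i j. B $$ (i, j)"] by blast
qed

definition forms_gram_matrix :: "nat \<Rightarrow> (nat \<Rightarrow> 'd::finite \<Rightarrow> complex) \<Rightarrow> real^'d^'d" where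
  "forms_gram_matrix n C = (\<chi> k l. Re (\<Sum>i<n. cnj (C i k) * C i l))"

lemma inner_forms_gram_matrix:
  "x \<bullet> (forms_gram_matrix n C *v y)
     = Re (\<Sum>i<n. cnj (complex_form (C i) x) * complex_form (C i) y)"
proof -
  have "x \<bullet> (forms_gram_matrix n C *v y)
      = (\<Sum>k\<in>UNIV. x $ k * (\<Sum>l\<in>UNIV. Re (\<Sum>i<n. cnj (C i k) * C i l) * y $ l))"
    by (simp add: inner_vec_def matrix_vector_mult_def forms_gram_matrix_def)
  also have "\<dots> = (\<Sum>k\<in>UNIV. \<Sum>l\<in>UNIV. \<Sum>i<n. Re (cnj (C i k * of_real (x $ k)) * (C i l * of_real (y $ l))))"
    by (simp add: sum_distrib_left sum_distrib_right Re_sum mult_ac distrib_left sum.distrib)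
  also have "\<dots> = (\<Sum>i<n. \<Sum>k\<in>UNIV. \<Sum>l\<in>UNIV. Re (cnj (C i k * of_real (x $ k)) * (C i l * of_real (y $ l))))"
    by (simp add: sum.swap[of _ "{..<n}"])
  also have "\<dots> = Re (\<Sum>i<n. cnj (complex_form (C i) x) * complex_form (C i) y)"
    by (simp add: complex_form_def Re_sum cnj_sum sum_product)
  finally show ?thesis .
qed

lemma quadratic_forms_gram_matrix:
  "x \<bullet> (forms_gram_matrix n C *v x) = (\<Sum>i<n. (cmod (complex_form (C i) x))\<^sup>2)"
  unfolding inner_forms_gram_matrix Re_sum
  by (simp add: complex_mult_cnj cmod_def power2_eq_square)

lemma sym_pos_def_forms_gram_matrix:
  assumes inj: "\<And>x. (\<And>i. i < n \<Longrightarrow> complex_form (C i) x = 0) \<Longrightarrow> x = 0"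
  shows "sym_pos_def (forms_gram_matrix n C)"
  unfolding sym_pos_def_def
proof (intro conjI allI impI)
  have "Re (\<Sum>i<n. cnj (C i l) * C i k) = Re (\<Sum>i<n. cnj (C i k) * C i l)" for k l
  proof -
    have "(\<Sum>i<n. cnj (C i l) * C i k) = cnj (\<Sum>i<n. cnj (C i k) * C i l)"
      by (simp add: cnj_sum mult.commute)
    thus ?thesis by simp
  qed
  thus "transpose (forms_gram_matrix n C) = forms_gram_matrix n C"
    by (simp add: forms_gram_matrix_def transpose_def Finite_Cartesian_Product.vec_eq_iff)
next
  fix x :: "real^'a" assume "x \<noteq> 0"
  hence "\<exists>i<n. (cmod (complex_form (C i) x))\<^sup>2 \<noteq> 0" using inj by auto
  thus "x \<bullet> (forms_gram_matrix n C *v x) > 0"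
    unfolding quadratic_forms_gram_matrix
    by (metis (no_types, lifting) finite_lessThan lessThan_iff order_less_le sum_nonneg
        sum_nonneg_eq_0_iff zero_le_power2)
qed

lemma Re_sesquilinear_sum_le:
  fixes T :: "nat \<Rightarrow> nat \<Rightarrow> complex" and w :: "nat \<Rightarrow> complex"
  assumes diag: "\<And>i. i < n \<Longrightarrow> Re (T i i) \<le> -a"
    and off_diag: "\<And>i j. i < n \<Longrightarrow> j < n \<Longrightarrow> i \<noteq> j \<Longrightarrow> cmod (T i j) \<le> e"
    and "e \<ge> 0"
  shows "Re (\<Sum>i<n. \<Sum>j<n. cnj (w i) * (T i j * w j)) \<le> (-a + e * n) * (\<Sum>i<n. (cmod (w i))\<^sup>2)"
proof -
  let ?s = "\<lambda>i. (cmod (w i))\<^sup>2"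
  have termwise: "Re (cnj (w i) * (T i j * w j)) \<le> (if i = j then -a * ?s i else 0) + e * (?s i + ?s j) / 2"
    if "i < n" "j < n" for i j
  proof (cases "i = j")
    case True
    have "Re (cnj (w i) * (T i i * w i)) = Re (T i i) * ?s i"
      by (simp add: mult.left_commute[of "cnj _"] complex_mult_cnj cmod_def power2_eq_square)
    also have "\<dots> \<le> -a * ?s i" using diag \<open>i < n\<close> by (intro mult_right_mono) auto
    finally have "Re (cnj (w i) * (T i i * w i)) \<le> -a * ?s i" .
    moreover have "0 \<le> e * (?s i + ?s j) / 2" using \<open>e \<ge> 0\<close> by simp
    ultimately show ?thesis using True by simp
  next
    case False
    have "Re (cnj (w i) * (T i j * w j)) \<le> cmod (T i j) * (cmod (w i) * cmod (w j))"
      using complex_Re_le_cmod[of "cnj (w i) * (T i j * w j)"] by (simp add: norm_mult mult_ac)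
    also have "\<dots> \<le> e * (cmod (w i) * cmod (w j))"
      using off_diag that False by (intro mult_right_mono) auto
    also have "\<dots> \<le> e * (?s i + ?s j) / 2"
      using mult_left_mono[OF sum_squares_bound[of "cmod (w i)" "cmod (w j)"] \<open>e \<ge> 0\<close>]
      by (simp add: power2_eq_square)
    finally show ?thesis using False by simp
  qed
  have "Re (\<Sum>i<n. \<Sum>j<n. cnj (w i) * (T i j * w j))
      \<le> (\<Sum>i<n. \<Sum>j<n. (if i = j then -a * ?s i else 0) + e * (?s i + ?s j) / 2)"
    unfolding Re_sum by (intro sum_mono termwise) auto
  also have "\<dots> = (-a + e * n) * (\<Sum>i<n. ?s i)"
  proof -
    have "(\<Sum>i<n. \<Sum>j<n. e * (?s i + ?s j) / 2)
        = e / 2 * (\<Sum>i<n. \<Sum>j<n. ?s i) + e / 2 * (\<Sum>i<n. \<Sum>j<n. ?s j)"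
      by (simp add: sum.distrib sum_distrib_left add_divide_distrib distrib_left mult_ac)
    also have "\<dots> = e * n * (\<Sum>i<n. ?s i)"
      by (simp add: sum_distrib_left[symmetric] field_simps)
    finally have off: "(\<Sum>i<n. \<Sum>j<n. e * (?s i + ?s j) / 2) = e * n * (\<Sum>i<n. ?s i)" .
    have on: "(\<Sum>i<n. \<Sum>j<n. if i = j then -a * ?s i else 0) = -a * (\<Sum>i<n. ?s i)"
      by (simp add: sum_distrib_left)
    show ?thesis by (simp only: sum.distrib on off) (simp add: algebra_simps)
  qed
  finally show ?thesis .
qed

lemma forms_gram_matrix_lyapunov_bound:
  fixes A :: "real^'d::finite^'d"
  assumes intertwine:
      "\<And>i x. i < n \<Longrightarrow> complex_form (C i) (A *v x) = (\<Sum>j<n. T i j * complex_form (C j) x)"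
    and diag: "\<And>i. i < n \<Longrightarrow> Re (T i i) \<le> -a"
    and off_diag: "\<And>i j. i < n \<Longrightarrow> j < n \<Longrightarrow> i \<noteq> j \<Longrightarrow> cmod (T i j) \<le> e"
    and "e \<ge> 0"
  shows "x \<bullet> (forms_gram_matrix n C *v (A *v x)) \<le> (-a + e * n) * (x \<bullet> (forms_gram_matrix n C *v x))"
proof -
  have "x \<bullet> (forms_gram_matrix n C *v (A *v x))
      = Re (\<Sum>i<n. \<Sum>j<n. cnj (complex_form (C i) x) * (T i j * complex_form (C j) x))"
    unfolding inner_forms_gram_matrix
    by (intro arg_cong[where f = Re] sum.cong refl) (simp add: intertwine sum_distrib_left)
  also have "\<dots> \<le> (-a + e * n) * (\<Sum>i<n. (cmod (complex_form (C i) x))\<^sup>2)"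
    by (rule Re_sesquilinear_sum_le[OF diag off_diag \<open>e \<ge> 0\<close>])
  finally show ?thesis unfolding quadratic_forms_gram_matrix .
qed

lemma rescaled_upper_triangular_entry_le:
  fixes B :: "nat \<Rightarrow> nat \<Rightarrow> complex"
  assumes upper: "j < i \<Longrightarrow> B i j = 0" and bound: "cmod (B i j) \<le> K"
    and "0 < \<epsilon>" "\<epsilon> \<le> 1" "i \<noteq> j"
  shows "cmod (B i j * of_real (\<epsilon> ^ j) / of_real (\<epsilon> ^ i)) \<le> K * \<epsilon>"
proof (cases "j < i")
  case True
  thus ?thesis using upper bound \<open>0 < \<epsilon>\<close> norm_ge_zero[of "B i j"] by simp
next
  case False
  hence "i < j" using \<open>i \<noteq> j\<close> by simp
  have "cmod (B i j * of_real (\<epsilon> ^ j) / of_real (\<epsilon> ^ i)) = cmod (B i j) * \<epsilon> ^ (j - i)"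
    using \<open>0 < \<epsilon>\<close> \<open>i < j\<close> by (simp add: norm_mult norm_divide norm_power power_diff)
  also have "\<dots> \<le> K * \<epsilon> ^ 1"
    using bound order_trans[OF norm_ge_zero bound] \<open>0 < \<epsilon>\<close> \<open>\<epsilon> \<le> 1\<close> \<open>i < j\<close>
    by (intro mult_mono power_decreasing) auto
  finally show ?thesis by simp
qed

lemma lyapunov_matrix_of_schur_forms:
  fixes A :: "real^'d::finite^'d" and Q :: "nat \<Rightarrow> 'd \<Rightarrow> complex" and B :: "nat \<Rightarrow> nat \<Rightarrow> complex"
  assumes intertwine:
      "\<And>i x. i < n \<Longrightarrow> complex_form (Q i) (A *v x) = (\<Sum>j<n. B i j * complex_form (Q j) x)"
    and upper: "\<And>i j. i < n \<Longrightarrow> j < i \<Longrightarrow> B i j = 0"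
    and diag: "\<And>i. i < n \<Longrightarrow> Re (B i i) \<le> - a"
    and inj: "\<And>x. (\<And>i. i < n \<Longrightarrow> complex_form (Q i) x = 0) \<Longrightarrow> x = 0"
    and "\<eta> > 0"
  obtains M where "sym_pos_def M" "\<And>x. x \<bullet> (M *v (A *v x)) \<le> - (a - \<eta>) * (x \<bullet> (M *v x))"
proof -
  define K where "K = 1 + (\<Sum>i<n. \<Sum>j<n. cmod (B i j))"
  have "K > 0" unfolding K_def by (simp add: add_pos_nonneg sum_nonneg)
  have bound: "cmod (B i j) \<le> K" if "i < n" "j < n" for i j
  proof -
    have "cmod (B i j) \<le> (\<Sum>j<n. cmod (B i j))" using that by (intro member_le_sum) auto
    also have "\<dots> \<le> (\<Sum>i<n. \<Sum>j<n. cmod (B i j))"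
      using that by (intro member_le_sum[where f = "\<lambda>i. \<Sum>j<n. cmod (B i j)"]) (auto intro: sum_nonneg)
    finally show ?thesis unfolding K_def by simp
  qed
  \<comment> \<open>Conjugating by diag(1, \<epsilon>, \<epsilon>^2, ...) shrinks the strictly upper triangular part by \<epsilon>.\<close>
  define \<epsilon> where "\<epsilon> = min 1 (\<eta> / ((n + 1) * K))"
  have "0 < \<eta> / ((n + 1) * K)" using \<open>\<eta> > 0\<close> \<open>K > 0\<close> by simp
  hence "K * \<epsilon> * n \<le> K * (\<eta> / ((n + 1) * K)) * n"
    using \<open>K > 0\<close> by (intro mult_right_mono mult_left_mono) (auto simp: \<epsilon>_def)
  also have "\<dots> = \<eta> * (n / (n + 1))" using \<open>K > 0\<close> by simp
  also have "\<dots> \<le> \<eta> * 1" using \<open>\<eta> > 0\<close> by (intro mult_left_mono) auto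
  finally have \<epsilon>: "0 < \<epsilon>" "\<epsilon> \<le> 1" "K * \<epsilon> * n \<le> \<eta>"
    using \<open>0 < \<eta> / ((n + 1) * K)\<close> by (auto simp: \<epsilon>_def)
  define C where "C i k = Q i k / of_real (\<epsilon> ^ i)" for i k
  define T where "T i j = B i j * of_real (\<epsilon> ^ j) / of_real (\<epsilon> ^ i)" for i j
  have C_form: "complex_form (C i) x = complex_form (Q i) x / of_real (\<epsilon> ^ i)" for i x
    unfolding C_def complex_form_def by (simp add: sum_divide_distrib)
  have "complex_form (C i) (A *v x) = (\<Sum>j<n. T i j * complex_form (C j) x)" if "i < n" for i x
    using \<epsilon>(1) by (simp add: C_form intertwine[OF that] T_def sum_divide_distrib)
  moreover have "Re (T i i) \<le> - a" if "i < n" for i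
    using diag[OF that] \<epsilon>(1) by (simp add: T_def)
  moreover have "cmod (T i j) \<le> K * \<epsilon>" if "i < n" "j < n" "i \<noteq> j" for i j
    unfolding T_def using that upper bound \<epsilon> by (intro rescaled_upper_triangular_entry_le) auto
  ultimately have "x \<bullet> (forms_gram_matrix n C *v (A *v x))
      \<le> (- a + K * \<epsilon> * n) * (x \<bullet> (forms_gram_matrix n C *v x))" for x
    using \<open>K > 0\<close> \<epsilon>(1) by (intro forms_gram_matrix_lyapunov_bound) auto
  also have "(- a + K * \<epsilon> * n) * (x \<bullet> (forms_gram_matrix n C *v x))
      \<le> - (a - \<eta>) * (x \<bullet> (forms_gram_matrix n C *v x))" for x
    using \<epsilon>(3) by (intro mult_right_mono) (auto simp: quadratic_forms_gram_matrix sum_nonneg)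
  finally show ?thesis
    using inj \<epsilon>(1) that sym_pos_def_forms_gram_matrix[of n C] by (simp add: C_form)
qed

lemma lyapunov_matrix_exists:
  fixes A :: "real^'d::finite^'d"
  assumes eig: "\<forall>lam. complex_eigenvalue A lam \<longrightarrow> Re lam < - \<rho>"
  obtains M \<rho>1 where "sym_pos_def M" "\<rho> < \<rho>1"
    "\<And>x. x \<bullet> (M *v (A *v x)) \<le> - \<rho>1 * (x \<bullet> (M *v x))"
proof -
  let ?n = "CARD('d)"
  obtain Q B where intertwine:
      "\<And>i x. i < ?n \<Longrightarrow> complex_form (Q i) (A *v x) = (\<Sum>j<?n. B i j * complex_form (Q j) x)"
    and upper: "\<And>i j. i < ?n \<Longrightarrow> j < i \<Longrightarrow> B i j = 0"
    and ev: "\<And>i. i < ?n \<Longrightarrow> complex_eigenvalue A (B i i)"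
    and inj: "\<And>x. (\<And>i. i < ?n \<Longrightarrow> complex_form (Q i) x = 0) \<Longrightarrow> x = 0"
    using complex_schur_forms[of A] by blast
  define \<eta> where "\<eta> = Min ((\<lambda>i. - \<rho> - Re (B i i)) ` {..<?n})"
  have "\<eta> > 0" unfolding \<eta>_def using ev eig by (subst Min_gr_iff) (auto simp: lessThan_empty_iff)
  have "Re (B i i) \<le> - (\<rho> + \<eta>)" if "i < ?n" for i
  proof -
    have "\<eta> \<le> - \<rho> - Re (B i i)" unfolding \<eta>_def using that by (intro Min_le) auto
    thus ?thesis by simp
  qed
  then obtain M where "sym_pos_def M"
    "\<And>x. x \<bullet> (M *v (A *v x)) \<le> - (\<rho> + \<eta> - \<eta> / 2) * (x \<bullet> (M *v x))"
    using lyapunov_matrix_of_schur_forms[OF intertwine upper _ inj, of "\<rho> + \<eta>" "\<eta> / 2"] \<open>\<eta> > 0\<close>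
    by auto
  with \<open>\<eta> > 0\<close> show ?thesis using that[of M "\<rho> + \<eta> / 2"] by (simp add: algebra_simps)
qed

section \<open>The M-norm\<close>

lemma symmetric_matrix_inner_commute:
  fixes M :: "real^'d::finite^'d"
  assumes "transpose M = M"
  shows "x \<bullet> (M *v y) = y \<bullet> (M *v x)"
  by (metis assms dot_lmul_matrix inner_commute transpose_matrix_vector)

lemma quadratic_form_nonneg:
  fixes M :: "real^'d::finite^'d"
  assumes "sym_pos_def M"
  shows "0 \<le> x \<bullet> (M *v x)"
  using assms unfolding sym_pos_def_def by (cases "x = 0") (auto intro: less_imp_le)

lemma quadratic_form_scaleR:
  fixes M :: "real^'d::finite^'d"
  shows "(a *\<^sub>R x) \<bullet> (M *v (a *\<^sub>R x)) = a\<^sup>2 * (x \<bullet> (M *v x))"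
  by (simp add: matrix_vector_mult_scaleR power2_eq_square)

lemma quadratic_form_add:
  fixes M :: "real^'d::finite^'d"
  assumes "transpose M = M"
  shows "(x + y) \<bullet> (M *v (x + y)) = x \<bullet> (M *v x) + 2 * (x \<bullet> (M *v y)) + y \<bullet> (M *v y)"
  using symmetric_matrix_inner_commute[OF assms, of y x]
  by (simp add: matrix_vector_right_distrib inner_add_left inner_add_right)

lemma quadratic_form_coercive:
  fixes M :: "real^'d::finite^'d"
  assumes "sym_pos_def M"
  obtains m where "m > 0" "\<And>x. m * (norm x)\<^sup>2 \<le> x \<bullet> (M *v x)"
proof -
  have "sphere (0::real^'d) 1 \<noteq> {}" by simp
  then obtain x0 where x0: "x0 \<in> sphere 0 1"
    and min: "\<And>y. y \<in> sphere 0 1 \<Longrightarrow> x0 \<bullet> (M *v x0) \<le> y \<bullet> (M *v y)"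
    using continuous_attains_inf[OF compact_sphere _ continuous_on_inner[OF continuous_on_id
          linear_continuous_on[OF matrix_vector_mul_bounded_linear]]]
    by blast
  have "x0 \<noteq> 0" using x0 by auto
  hence pos: "x0 \<bullet> (M *v x0) > 0" using assms unfolding sym_pos_def_def by blast
  have "x0 \<bullet> (M *v x0) * (norm x)\<^sup>2 \<le> x \<bullet> (M *v x)" for x
  proof (cases "x = 0")
    case False
    have "x0 \<bullet> (M *v x0) \<le> (x /\<^sub>R norm x) \<bullet> (M *v (x /\<^sub>R norm x))"
      using False by (intro min) simp
    also have "\<dots> = x \<bullet> (M *v x) / (norm x)\<^sup>2"
      unfolding quadratic_form_scaleR by (simp add: power_inverse field_simps)
    finally show ?thesis using False by (simp add: field_simps)
  qed simp
  with pos show ?thesis using that by blast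
qed

lemma quadratic_form_le_onorm:
  fixes M :: "real^'d::finite^'d"
  shows "\<bar>x \<bullet> (M *v y)\<bar> \<le> onorm ((*v) M) * norm x * norm y"
proof -
  have "\<bar>x \<bullet> (M *v y)\<bar> \<le> norm x * norm (M *v y)" by (rule Cauchy_Schwarz_ineq2)
  also have "\<dots> \<le> norm x * (onorm ((*v) M) * norm y)"
    by (intro mult_left_mono onorm) auto
  finally show ?thesis by (simp add: mult_ac)
qed

lemma normM_squared:
  fixes M :: "real^'d::finite^'d"
  assumes "sym_pos_def M"
  shows "(normM M x)\<^sup>2 = x \<bullet> (M *v x)"
  unfolding normM_def by (rule real_sqrt_pow2[OF quadratic_form_nonneg[OF assms]])

lemma normM_nonneg:
  fixes M :: "real^'d::finite^'d"
  assumes "sym_pos_def M"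
  shows "0 \<le> normM M x"
  unfolding normM_def using quadratic_form_nonneg[OF assms] by simp

lemma normM_scaleR:
  fixes M :: "real^'d::finite^'d"
  shows "normM M (a *\<^sub>R x) = \<bar>a\<bar> * normM M x"
  unfolding normM_def quadratic_form_scaleR by (simp add: real_sqrt_mult)

lemma norm_le_normM:
  fixes M :: "real^'d::finite^'d"
  assumes "m > 0" and m: "\<And>x. m * (norm x)\<^sup>2 \<le> x \<bullet> (M *v x)"
  shows "norm x \<le> normM M x / sqrt m"
proof -
  have "sqrt (m * (norm x)\<^sup>2) \<le> normM M x" unfolding normM_def using m by simp
  thus ?thesis using \<open>m > 0\<close> by (simp add: real_sqrt_mult field_simps)
qed

lemma normM_ball_subset_cball:
  fixes M :: "real^'d::finite^'d"
  assumes M: "sym_pos_def M" and "e > 0"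
  obtains \<delta> where "\<delta> > 0" "\<And>x. normM M (x - c) \<le> \<delta> \<Longrightarrow> x \<in> cball c e"
proof -
  obtain m where "m > 0" and m: "\<And>x. m * (norm x)\<^sup>2 \<le> x \<bullet> (M *v x)"
    using quadratic_form_coercive[OF M] by blast
  have "x \<in> cball c e" if "normM M (x - c) \<le> e * sqrt m" for x
  proof -
    have "norm (x - c) \<le> normM M (x - c) / sqrt m" by (rule norm_le_normM[OF \<open>m > 0\<close> m])
    also have "\<dots> \<le> e" using that \<open>m > 0\<close> by (simp add: divide_le_eq)
    finally show ?thesis by (simp add: dist_norm norm_minus_commute)
  qed
  with \<open>e > 0\<close> \<open>m > 0\<close> show ?thesis by (intro that[of "e * sqrt m"]) auto
qed

lemma sqrt_add_le_tangent:
  fixes a b :: real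
  assumes "a > 0" "a + b \<ge> 0"
  shows "sqrt (a + b) \<le> sqrt a + b / (2 * sqrt a)"
proof -
  define s where "s = sqrt a"
  have "s > 0" "a = s\<^sup>2" using assms by (simp_all add: s_def)
  have "0 \<le> (2 * a + b) / (2 * s)" using assms \<open>s > 0\<close> by simp
  also have "(2 * a + b) / (2 * s) = s + b / (2 * s)"
    using \<open>s > 0\<close> \<open>a = s\<^sup>2\<close> by (simp add: field_simps power2_eq_square)
  finally have "0 \<le> s + b / (2 * s)" .
  moreover have "(s + b / (2 * s))\<^sup>2 = a + b + b\<^sup>2 / (4 * a)"
    using \<open>s > 0\<close> \<open>a = s\<^sup>2\<close> by (simp add: power2_eq_square field_simps)
  ultimately show ?thesis
    unfolding s_def[symmetric] using assms by (intro real_le_lsqrt) auto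
qed

lemma normM_increment_le:
  fixes M :: "real^'d::finite^'d"
  assumes M: "sym_pos_def M" and w: "normM M w > 0"
  shows "normM M (w + h) - normM M w \<le> (2 * (w \<bullet> (M *v h)) + h \<bullet> (M *v h)) / (2 * normM M w)"
proof -
  have sym: "transpose M = M" using M unfolding sym_pos_def_def by blast
  have "w \<bullet> (M *v w) > 0" using w unfolding normM_def by simp
  hence "sqrt (w \<bullet> (M *v w) + (2 * (w \<bullet> (M *v h)) + h \<bullet> (M *v h)))
      \<le> sqrt (w \<bullet> (M *v w)) + (2 * (w \<bullet> (M *v h)) + h \<bullet> (M *v h)) / (2 * sqrt (w \<bullet> (M *v w)))"
    using quadratic_form_nonneg[OF M, of "w + h"] quadratic_form_add[OF sym, of w h]
    by (intro sqrt_add_le_tangent) (simp_all add: add.assoc)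
  thus ?thesis unfolding normM_def quadratic_form_add[OF sym] by (simp add: add.assoc)
qed

lemma has_real_derivative_quadratic_form:
  fixes w :: "real \<Rightarrow> real^'d::finite" and M :: "real^'d^'d"
  assumes "(w has_vector_derivative w') (at t within S)" and "transpose M = M"
  shows "((\<lambda>s. w s \<bullet> (M *v w s)) has_real_derivative 2 * (w t \<bullet> (M *v w'))) (at t within S)"
proof -
  have "((\<lambda>s. w s \<bullet> (M *v w s)) has_derivative
      (\<lambda>h. w t \<bullet> (M *v (h *\<^sub>R w')) + (h *\<^sub>R w') \<bullet> (M *v w t))) (at t within S)"
    using assms(1) unfolding has_vector_derivative_def
    by (intro has_derivative_inner bounded_linear.has_derivative[OF matrix_vector_mul_bounded_linear])
  moreover have "(\<lambda>h. w t \<bullet> (M *v (h *\<^sub>R w')) + (h *\<^sub>R w') \<bullet> (M *v w t)) = (*) (2 * (w t \<bullet> (M *v w')))"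
    using symmetric_matrix_inner_commute[OF assms(2), of w' "w t"]
    by (auto simp: matrix_vector_mult_scaleR algebra_simps)
  ultimately show ?thesis unfolding has_field_derivative_def by simp
qed

section \<open>Scalar differential inequalities on [0, \<infinity>)\<close>

lemma increasing_if_deriv_nonneg_within_atLeast:
  fixes f f' :: "real \<Rightarrow> real"
  assumes deriv: "\<And>t. t \<in> {a..b} \<Longrightarrow> (f has_real_derivative f' t) (at t within {0..})"
    and nonneg: "\<And>t. a < t \<Longrightarrow> t < b \<Longrightarrow> 0 \<le> f' t"
    and "0 \<le> a" "a \<le> b"
  shows "f a \<le> f b"
proof (rule DERIV_nonneg_imp_increasing_open[OF \<open>a \<le> b\<close>])
  fix t assume "a < t" "t < b"
  moreover have "at t within {0..} = at t"
    using \<open>0 \<le> a\<close> \<open>a < t\<close> by (intro at_within_interior) auto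
  ultimately show "\<exists>y. (f has_real_derivative y) (at t) \<and> 0 \<le> y"
    using deriv nonneg by (metis atLeastAtMost_iff less_imp_le)
next
  have "(f has_real_derivative f' t) (at t within {a..b})" if "t \<in> {a..b}" for t
    by (rule has_field_derivative_subset[OF deriv[OF that]]) (use \<open>0 \<le> a\<close> in auto)
  thus "continuous_on {a..b} f" by (rule DERIV_continuous_on)
qed

lemma forward_invariant_sublevel:
  fixes V V' :: "real \<Rightarrow> real"
  assumes deriv: "\<And>t. 0 \<le> t \<Longrightarrow> (V has_real_derivative V' t) (at t within {0..})"
    and nonpos: "\<And>t. 0 \<le> t \<Longrightarrow> V t < b \<Longrightarrow> V' t \<le> 0"
    and "V 0 < b" "0 \<le> t"
  shows "V t \<le> V 0"
proof (rule ccontr)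
  assume "\<not> V t \<le> V 0"
  define c where "c = (V 0 + min (V t) b) / 2"
  have c: "V 0 < c" "c < V t" "c < b" using \<open>\<not> V t \<le> V 0\<close> \<open>V 0 < b\<close> by (auto simp: c_def)
  \<comment> \<open>the first time V reaches the level c\<close>
  define S where "S = {0..t} \<inter> V -` {c..}"
  have "(V has_real_derivative V' u) (at u within {0..t})" if "u \<in> {0..t}" for u
    using that by (intro has_field_derivative_subset[OF deriv]) auto
  hence "continuous_on {0..t} V" by (rule DERIV_continuous_on)
  hence "closed S" unfolding S_def by (intro continuous_closed_preimage) auto
  moreover have "t \<in> S" "bdd_below S" using \<open>0 \<le> t\<close> c by (auto simp: S_def bdd_below_def)
  ultimately have "Inf S \<in> S" by (intro closed_contains_Inf) auto
  hence "0 \<le> Inf S" "c \<le> V (Inf S)" by (auto simp: S_def)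
  have below: "V u < c" if "0 \<le> u" "u < Inf S" for u
  proof (rule ccontr)
    assume "\<not> V u < c"
    hence "u \<in> S" using that \<open>Inf S \<in> S\<close> by (auto simp: S_def)
    hence "Inf S \<le> u" by (rule cInf_lower[OF _ \<open>bdd_below S\<close>])
    thus False using that by simp
  qed
  have "(\<lambda>u. - V u) 0 \<le> (\<lambda>u. - V u) (Inf S)"
  proof (rule increasing_if_deriv_nonneg_within_atLeast[where f = "\<lambda>u. - V u" and f' = "\<lambda>u. - V' u"])
    show "((\<lambda>u. - V u) has_real_derivative - V' u) (at u within {0..})" if "u \<in> {0..Inf S}" for u
      using deriv[of u] that by (auto intro: DERIV_minus)
    show "0 \<le> - V' u" if "0 < u" "u < Inf S" for u
      using nonpos[of u] below[of u] c that by simp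
  qed (use \<open>0 \<le> Inf S\<close> in auto)
  thus False using c \<open>c \<le> V (Inf S)\<close> by simp
qed

text \<open>Gronwall in both time directions: W e^(Lu) increases and W e^(-Lu) decreases.\<close>
lemma vanishes_everywhere_if_gronwall:
  fixes W W' :: "real \<Rightarrow> real"
  assumes nonneg: "\<And>t. 0 \<le> t \<Longrightarrow> 0 \<le> W t"
    and deriv: "\<And>t. 0 \<le> t \<Longrightarrow> (W has_real_derivative W' t) (at t within {0..})"
    and bound: "\<And>t. 0 \<le> t \<Longrightarrow> \<bar>W' t\<bar> \<le> L * W t"
    and "0 \<le> t" "W t = 0" "0 \<le> s"
  shows "W s = 0"
proof (cases "t \<le> s")
  case True
  have "(\<lambda>u. - (W u * exp (- L * u))) t \<le> (\<lambda>u. - (W u * exp (- L * u))) s"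
  proof (rule increasing_if_deriv_nonneg_within_atLeast
      [where f = "\<lambda>u. - (W u * exp (- L * u))" and f' = "\<lambda>u. - (W' u * exp (- L * u) + W u * (exp (- L * u) * - L))"])
    show "((\<lambda>u. - (W u * exp (- L * u))) has_real_derivative
        - (W' u * exp (- L * u) + W u * (exp (- L * u) * - L))) (at u within {0..})"
      if "u \<in> {t..s}" for u
      using deriv[of u] that \<open>0 \<le> t\<close> by (auto intro!: derivative_eq_intros)
    show "0 \<le> - (W' u * exp (- L * u) + W u * (exp (- L * u) * - L))" if "t < u" "u < s" for u
    proof -
      have "0 \<le> (L * W u - W' u) * exp (- L * u)" using bound[of u] that \<open>0 \<le> t\<close> by simp
      thus ?thesis by (simp add: algebra_simps)
    qed
  qed (use True \<open>0 \<le> t\<close> in auto)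
  thus ?thesis using \<open>W t = 0\<close> nonneg[OF \<open>0 \<le> s\<close>] by (simp add: mult_le_0_iff)
next
  case False
  have "(\<lambda>u. W u * exp (L * u)) s \<le> (\<lambda>u. W u * exp (L * u)) t"
  proof (rule increasing_if_deriv_nonneg_within_atLeast
      [where f = "\<lambda>u. W u * exp (L * u)" and f' = "\<lambda>u. W' u * exp (L * u) + W u * (exp (L * u) * L)"])
    show "((\<lambda>u. W u * exp (L * u)) has_real_derivative W' u * exp (L * u) + W u * (exp (L * u) * L))
        (at u within {0..})" if "u \<in> {s..t}" for u
      using deriv[of u] that \<open>0 \<le> s\<close> by (auto intro!: derivative_eq_intros)
    show "0 \<le> W' u * exp (L * u) + W u * (exp (L * u) * L)" if "s < u" "u < t" for u
    proof -
      have "0 \<le> (W' u + L * W u) * exp (L * u)" using bound[of u] that \<open>0 \<le> s\<close> by simp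
      thus ?thesis by (simp add: algebra_simps)
    qed
  qed (use False \<open>0 \<le> s\<close> in auto)
  thus ?thesis using \<open>W t = 0\<close> nonneg[OF \<open>0 \<le> s\<close>] by (simp add: mult_le_0_iff)
qed

lemma sqrt_deriv_le_if_quadratic_decay:
  fixes W W' :: "real \<Rightarrow> real"
  assumes nonneg: "\<And>t. 0 \<le> t \<Longrightarrow> 0 \<le> W t"
    and deriv: "\<And>t. 0 \<le> t \<Longrightarrow> (W has_real_derivative W' t) (at t within {0..})"
    and decay: "\<And>t. 0 \<le> t \<Longrightarrow> W' t \<le> -2 * \<rho> * W t"
    and bound: "\<And>t. 0 \<le> t \<Longrightarrow> \<bar>W' t\<bar> \<le> L * W t"
    and "0 \<le> t"
  shows "\<exists>D. ((\<lambda>s. sqrt (W s)) has_real_derivative D) (at t within {0..}) \<and> D \<le> - \<rho> * sqrt (W t)"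
proof (cases "W t = 0")
  case True
  \<comment> \<open>sqrt is not differentiable at 0, but then W vanishes identically\<close>
  have zero: "W s = 0" if "0 \<le> s" for s
    using nonneg deriv bound \<open>0 \<le> t\<close> True that by (rule vanishes_everywhere_if_gronwall)
  have "((\<lambda>s. 0) has_real_derivative 0) (at t within {0..})" by simp
  hence "((\<lambda>s. sqrt (W s)) has_real_derivative 0) (at t within {0..})"
    by (rule has_field_derivative_transform_within[where d = 1]) (use zero \<open>0 \<le> t\<close> in auto)
  thus ?thesis using True by auto
next
  case False
  hence "W t > 0" using nonneg[OF \<open>0 \<le> t\<close>] by simp
  have sqrt_deriv: "((\<lambda>s. sqrt (W s)) has_real_derivative inverse (sqrt (W t)) / 2 * W' t) (at t within {0..})"
    by (rule DERIV_chain2[where f = sqrt and g = W, OF DERIV_real_sqrt[OF \<open>W t > 0\<close>] deriv[OF \<open>0 \<le> t\<close>]])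
  have "inverse (sqrt (W t)) / 2 * W' t \<le> inverse (sqrt (W t)) / 2 * (-2 * \<rho> * W t)"
    using decay[OF \<open>0 \<le> t\<close>] \<open>W t > 0\<close> by (intro mult_left_mono) auto
  also have "\<dots> = - \<rho> * sqrt (W t)"
    using \<open>W t > 0\<close> by (simp add: field_simps real_div_sqrt)
  finally show ?thesis using sqrt_deriv by blast
qed

section \<open>Contraction of the drift near the equilibrium\<close>

definition contracting_on :: "(real^'d::finite) set \<Rightarrow> real^'d^'d \<Rightarrow> real \<Rightarrow> (real^'d \<Rightarrow> real^'d) \<Rightarrow> bool" where
  "contracting_on S M \<rho> F \<longleftrightarrow>
     (\<forall>x\<in>S. \<forall>y\<in>S. (x - y) \<bullet> (M *v (F x - F y)) \<le> - \<rho> * ((x - y) \<bullet> (M *v (x - y))))"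

lemma contracting_on_mono:
  assumes "sym_pos_def M" "contracting_on S M \<rho>2 F" "\<rho> \<le> \<rho>2"
  shows "contracting_on S M \<rho> F"
  using assms quadratic_form_nonneg[OF assms(1)] unfolding contracting_on_def
  by (smt (verit, best) mult_right_mono)

lemma lyapunov_bound_perturbed:
  fixes M A :: "real^'d::finite^'d"
  assumes lyap: "d \<bullet> (M *v (A *v d)) \<le> - \<rho>1 * (d \<bullet> (M *v d))"
    and m: "m * (norm d)\<^sup>2 \<le> d \<bullet> (M *v d)"
    and p: "norm p \<le> \<epsilon> * norm d" and small: "onorm ((*v) M) * \<epsilon> \<le> (\<rho>1 - \<rho>2) * m"
    and "\<rho>2 \<le> \<rho>1"
  shows "d \<bullet> (M *v (A *v d + p)) \<le> - \<rho>2 * (d \<bullet> (M *v d))"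
proof -
  have "d \<bullet> (M *v p) \<le> onorm ((*v) M) * norm d * norm p"
    using quadratic_form_le_onorm[of d M p] by linarith
  also have "\<dots> \<le> onorm ((*v) M) * norm d * (\<epsilon> * norm d)"
    using p onorm_pos_le[of "(*v) M"] by (intro mult_left_mono) auto
  also have "\<dots> = onorm ((*v) M) * \<epsilon> * (norm d)\<^sup>2" by (simp add: power2_eq_square mult_ac)
  also have "\<dots> \<le> (\<rho>1 - \<rho>2) * m * (norm d)\<^sup>2" using small by (intro mult_right_mono) auto
  also have "\<dots> \<le> (\<rho>1 - \<rho>2) * (d \<bullet> (M *v d))"
    using m \<open>\<rho>2 \<le> \<rho>1\<close> by (simp add: mult.assoc mult_left_mono)
  finally show ?thesis
    using lyap by (simp add: matrix_vector_right_distrib inner_add_right algebra_simps)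
qed

lemma matA_mult_vec: "matA Js g c *v v = (\<Sum>J\<in>Js. (g J c \<bullet> v) *\<^sub>R ivec J)"
proof -
  have "(matA Js g c *v v) $ i = (\<Sum>J\<in>Js. \<Sum>k\<in>UNIV. real_of_int (J $ i) * (g J c $ k * v $ k))" for i
    by (simp add: matA_def matrix_vector_mult_def sum_distrib_left sum_distrib_right mult_ac
        sum.swap[of _ Js])
  thus ?thesis
    by (simp add: Finite_Cartesian_Product.vec_eq_iff sum_component inner_vec_def ivec_def
        sum_distrib_left mult_ac)
qed

lemma finite_family_bounded_on_compact:
  fixes f :: "'j \<Rightarrow> 'a::metric_space \<Rightarrow> 'b::real_normed_vector"
  assumes "finite Js" "compact K" "\<And>J. J \<in> Js \<Longrightarrow> continuous_on K (f J)"
  obtains B where "\<And>J x. J \<in> Js \<Longrightarrow> x \<in> K \<Longrightarrow> norm (f J x) \<le> B"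
proof -
  have "compact (\<Union>J\<in>Js. f J ` K)"
    using assms by (intro compact_UN compact_continuous_image) auto
  then obtain B where "\<forall>y\<in>(\<Union>J\<in>Js. f J ` K). norm y \<le> B"
    by (meson bounded_iff compact_imp_bounded)
  thus ?thesis using that by blast
qed

lemma drift_lipschitz_if_rates_lipschitz:
  assumes "finite Js" and lip: "\<And>J. J \<in> Js \<Longrightarrow> \<bar>r J x - r J y\<bar> \<le> L * norm (x - y)"
  shows "norm (drift Js r x - drift Js r y) \<le> L * (\<Sum>J\<in>Js. norm (ivec J)) * norm (x - y)"
proof -
  have "norm (drift Js r x - drift Js r y) = norm (\<Sum>J\<in>Js. (r J x - r J y) *\<^sub>R ivec J)"
    by (simp add: drift_def scaleR_diff_left sum_subtractf)
  also have "\<dots> \<le> (\<Sum>J\<in>Js. \<bar>r J x - r J y\<bar> * norm (ivec J))"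
    by (rule order_trans[OF norm_sum]) simp
  also have "\<dots> \<le> (\<Sum>J\<in>Js. L * norm (x - y) * norm (ivec J))"
    using lip by (intro sum_mono mult_right_mono) auto
  finally show ?thesis by (simp add: sum_distrib_left sum_distrib_right mult_ac)
qed

locale smooth_rates =
  fixes Js :: "(int^'d::finite) set" and r :: "int^'d \<Rightarrow> real^'d \<Rightarrow> real"
    and g :: "int^'d \<Rightarrow> real^'d \<Rightarrow> real^'d" and Shat :: "(real^'d) set"
  assumes finite_jumps: "finite Js"
    and rate_deriv: "\<And>J x. J \<in> Js \<Longrightarrow> x \<in> Shat \<Longrightarrow> (r J has_derivative (\<lambda>v. g J x \<bullet> v)) (at x within Shat)"
    and gradient_cont: "\<And>J. J \<in> Js \<Longrightarrow> continuous_on Shat (g J)"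
begin

lemma drift_has_derivative:
  assumes "x \<in> Shat"
  shows "(drift Js r has_derivative (*v) (matA Js g x)) (at x within Shat)"
proof -
  have "drift Js r = (\<lambda>y. \<Sum>J\<in>Js. r J y *\<^sub>R ivec J)" by (simp add: drift_def fun_eq_iff)
  moreover have "(*v) (matA Js g x) = (\<lambda>v. \<Sum>J\<in>Js. (g J x \<bullet> v) *\<^sub>R ivec J)"
    by (simp add: matA_mult_vec fun_eq_iff)
  ultimately show ?thesis
    using rate_deriv assms by (auto intro!: has_derivative_sum has_derivative_scaleR_left)
qed

lemma rates_lipschitz_on:
  assumes "compact K" "convex K" "K \<subseteq> Shat"
  obtains L where "\<And>J x y. J \<in> Js \<Longrightarrow> x \<in> K \<Longrightarrow> y \<in> K \<Longrightarrow> \<bar>r J x - r J y\<bar> \<le> L * norm (x - y)"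
proof -
  obtain B where B: "\<And>J z. J \<in> Js \<Longrightarrow> z \<in> K \<Longrightarrow> norm (g J z) \<le> B"
    using finite_family_bounded_on_compact[OF finite_jumps \<open>compact K\<close>, of g]
      gradient_cont continuous_on_subset \<open>K \<subseteq> Shat\<close> by metis
  have "\<bar>r J x - r J y\<bar> \<le> B * norm (x - y)" if "J \<in> Js" "x \<in> K" "y \<in> K" for J x y
  proof -
    have "(r J has_derivative (\<lambda>v. g J z \<bullet> v)) (at z within K)" if "z \<in> K" for z
      using rate_deriv \<open>J \<in> Js\<close> \<open>K \<subseteq> Shat\<close> that by (blast intro: has_derivative_subset)
    moreover have "onorm (\<lambda>v. g J z \<bullet> v) \<le> B" if "z \<in> K" for z
      using B[OF \<open>J \<in> Js\<close> that]
      by (intro onorm_le) (metis Cauchy_Schwarz_ineq2 mult_right_mono norm_ge_zero order_trans real_norm_def)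
    ultimately show ?thesis
      using differentiable_bound[OF \<open>convex K\<close>, where f = "r J" and f' = "\<lambda>z v. g J z \<bullet> v"]
        \<open>x \<in> K\<close> \<open>y \<in> K\<close> by simp
  qed
  thus ?thesis using that by blast
qed

lemma rates_bounded_on:
  assumes "compact K" "K \<subseteq> Shat"
  obtains R where "\<And>J x. J \<in> Js \<Longrightarrow> x \<in> K \<Longrightarrow> r J x \<le> R"
proof -
  have "continuous_on K (r J)" if "J \<in> Js" for J
    using rate_deriv[OF that] \<open>K \<subseteq> Shat\<close>
    by (intro has_derivative_continuous_on) (blast intro: has_derivative_subset)
  then obtain R where "\<And>J x. J \<in> Js \<Longrightarrow> x \<in> K \<Longrightarrow> norm (r J x) \<le> R"
    using finite_family_bounded_on_compact[OF finite_jumps \<open>compact K\<close>] by metis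
  thus ?thesis using that by (metis abs_le_D1 real_norm_def)
qed

lemma gradients_close_near:
  assumes "c \<in> interior Shat" "\<epsilon> > 0"
  obtains e where "e > 0" "cball c e \<subseteq> Shat"
    "\<And>J z. J \<in> Js \<Longrightarrow> z \<in> cball c e \<Longrightarrow> norm (g J z - g J c) \<le> \<epsilon>"
proof -
  obtain e1 where "e1 > 0" "cball c e1 \<subseteq> Shat" using assms(1) mem_interior_cball by blast
  have "\<forall>J\<in>Js. \<exists>d>0. \<forall>z. dist z c < d \<longrightarrow> dist (g J z) (g J c) < \<epsilon>"
    using continuous_on_interior[OF gradient_cont assms(1)] \<open>\<epsilon> > 0\<close>
    unfolding continuous_at_eps_delta by blast
  then obtain d where d: "\<And>J. J \<in> Js \<Longrightarrow> d J > 0"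
    "\<And>J z. J \<in> Js \<Longrightarrow> dist z c < d J \<Longrightarrow> dist (g J z) (g J c) < \<epsilon>"
    by metis
  define e where "e = Min (insert e1 (d ` Js)) / 2"
  have "Min (insert e1 (d ` Js)) > 0" using finite_jumps d(1) \<open>e1 > 0\<close> by (subst Min_gr_iff) auto
  hence "e > 0" by (simp add: e_def)
  moreover have "cball c e \<subseteq> cball c e1" using \<open>e > 0\<close> finite_jumps by (auto simp: e_def)
  moreover have "norm (g J z - g J c) \<le> \<epsilon>" if "J \<in> Js" "z \<in> cball c e" for J z
  proof -
    have "Min (insert e1 (d ` Js)) \<le> d J" using finite_jumps \<open>J \<in> Js\<close> by (intro Min_le) auto
    hence "e < d J" using d(1)[OF \<open>J \<in> Js\<close>] by (simp add: e_def)
    thus ?thesis using d(2)[OF \<open>J \<in> Js\<close>, of z] that by (auto simp: dist_norm norm_minus_commute)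
  qed
  ultimately show ?thesis using that \<open>cball c e1 \<subseteq> Shat\<close> by blast
qed

lemma drift_linearization_lipschitz:
  assumes "convex K" "K \<subseteq> Shat"
    and close: "\<And>J z. J \<in> Js \<Longrightarrow> z \<in> K \<Longrightarrow> norm (g J z - g J c) \<le> \<epsilon>"
    and "x \<in> K" "y \<in> K"
  shows "norm ((drift Js r x - matA Js g c *v x) - (drift Js r y - matA Js g c *v y))
    \<le> \<epsilon> * (\<Sum>J\<in>Js. norm (ivec J)) * norm (x - y)"
proof (rule differentiable_bound[OF \<open>convex K\<close> _ _ \<open>x \<in> K\<close> \<open>y \<in> K\<close>])
  fix z assume "z \<in> K"
  show "((\<lambda>z. drift Js r z - matA Js g c *v z) has_derivative
      (\<lambda>v. matA Js g z *v v - matA Js g c *v v)) (at z within K)"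
    using drift_has_derivative \<open>K \<subseteq> Shat\<close> \<open>z \<in> K\<close>
    by (intro has_derivative_diff bounded_linear_imp_has_derivative)
      (auto intro: has_derivative_subset)
  show "onorm (\<lambda>v. matA Js g z *v v - matA Js g c *v v) \<le> \<epsilon> * (\<Sum>J\<in>Js. norm (ivec J))"
  proof (rule onorm_le)
    fix v
    have "norm (matA Js g z *v v - matA Js g c *v v) = norm (\<Sum>J\<in>Js. ((g J z - g J c) \<bullet> v) *\<^sub>R ivec J)"
      by (simp add: matA_mult_vec inner_diff_left scaleR_diff_left sum_subtractf)
    also have "\<dots> \<le> (\<Sum>J\<in>Js. norm (g J z - g J c) * norm v * norm (ivec J))"
      by (rule order_trans[OF norm_sum sum_mono])
        (simp add: Cauchy_Schwarz_ineq2 mult_right_mono)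
    also have "\<dots> \<le> (\<Sum>J\<in>Js. \<epsilon> * norm v * norm (ivec J))"
      using close \<open>z \<in> K\<close> by (intro sum_mono mult_right_mono) auto
    finally show "norm (matA Js g z *v v - matA Js g c *v v) \<le> \<epsilon> * (\<Sum>J\<in>Js. norm (ivec J)) * norm v"
      by (simp add: sum_distrib_left sum_distrib_right mult_ac)
  qed
qed

lemma drift_contracting_near:
  assumes M: "sym_pos_def M" and c: "c \<in> interior Shat"
    and lyap: "\<And>x. x \<bullet> (M *v (matA Js g c *v x)) \<le> - \<rho>1 * (x \<bullet> (M *v x))"
    and "\<rho>2 < \<rho>1"
  obtains e where "e > 0" "cball c e \<subseteq> Shat" "contracting_on (cball c e) M \<rho>2 (drift Js r)"
proof -
  obtain m where "m > 0" and m: "\<And>x. m * (norm x)\<^sup>2 \<le> x \<bullet> (M *v x)"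
    using quadratic_form_coercive[OF M] by blast
  define SJ where "SJ = 1 + (\<Sum>J\<in>Js. norm (ivec J))"
  have "SJ > 0" unfolding SJ_def by (simp add: add_pos_nonneg sum_nonneg)
  define \<Lambda> where "\<Lambda> = onorm ((*v) M) + 1"
  have "0 \<le> onorm ((*v) M)" "\<Lambda> > 0" using onorm_pos_le[of "(*v) M"] by (simp_all add: \<Lambda>_def)
  define \<epsilon> where "\<epsilon> = (\<rho>1 - \<rho>2) * m / (\<Lambda> * SJ)"
  have "\<epsilon> > 0" using \<open>\<rho>2 < \<rho>1\<close> \<open>m > 0\<close> \<open>SJ > 0\<close> \<open>\<Lambda> > 0\<close> by (simp add: \<epsilon>_def)
  have "onorm ((*v) M) * (\<epsilon> * SJ) \<le> \<Lambda> * (\<epsilon> * SJ)"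
    using \<open>\<epsilon> > 0\<close> \<open>SJ > 0\<close> by (intro mult_right_mono) (auto simp: \<Lambda>_def)
  also have "\<dots> = (\<rho>1 - \<rho>2) * m" using \<open>SJ > 0\<close> \<open>\<Lambda> > 0\<close> by (simp add: \<epsilon>_def)
  finally have small: "onorm ((*v) M) * (\<epsilon> * SJ) \<le> (\<rho>1 - \<rho>2) * m" .
  obtain e where "e > 0" "cball c e \<subseteq> Shat"
    and close: "\<And>J z. J \<in> Js \<Longrightarrow> z \<in> cball c e \<Longrightarrow> norm (g J z - g J c) \<le> \<epsilon>"
    using gradients_close_near[OF c \<open>\<epsilon> > 0\<close>] by blast
  let ?\<Phi> = "\<lambda>z. drift Js r z - matA Js g c *v z"
  have "(x - y) \<bullet> (M *v (drift Js r x - drift Js r y)) \<le> - \<rho>2 * ((x - y) \<bullet> (M *v (x - y)))"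
    if "x \<in> cball c e" "y \<in> cball c e" for x y
  proof -
    have "norm (?\<Phi> x - ?\<Phi> y) \<le> \<epsilon> * (\<Sum>J\<in>Js. norm (ivec J)) * norm (x - y)"
      using \<open>cball c e \<subseteq> Shat\<close> close that by (intro drift_linearization_lipschitz) auto
    also have "\<dots> \<le> \<epsilon> * SJ * norm (x - y)"
      using \<open>\<epsilon> > 0\<close> by (intro mult_right_mono) (auto simp: SJ_def)
    finally have \<Phi>: "norm (?\<Phi> x - ?\<Phi> y) \<le> (\<epsilon> * SJ) * norm (x - y)" .
    have split: "drift Js r x - drift Js r y = matA Js g c *v (x - y) + (?\<Phi> x - ?\<Phi> y)"
      by (simp add: matrix_vector_mult_diff_distrib algebra_simps)
    show ?thesis unfolding split
      by (rule lyapunov_bound_perturbed[OF lyap m \<Phi> small]) (use \<open>\<rho>2 < \<rho>1\<close> in simp)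
  qed
  thus ?thesis using that \<open>e > 0\<close> \<open>cball c e \<subseteq> Shat\<close> unfolding contracting_on_def by blast
qed

end

section \<open>Solutions of the limiting ODE\<close>

lemma contracting_on_solution_approaches_equilibrium:
  fixes F :: "real^'d::finite \<Rightarrow> real^'d" and y :: "real \<Rightarrow> real^'d"
  assumes M: "sym_pos_def M" and contr: "contracting_on S M \<rho> F" "0 \<le> \<rho>"
    and "c \<in> S" "F c = 0" and ball: "\<And>x. normM M (x - c) \<le> \<delta> \<Longrightarrow> x \<in> S"
    and sol: "\<And>t. 0 \<le> t \<Longrightarrow> (y has_vector_derivative F (y t)) (at t within {0..})"
    and start: "normM M (y 0 - c) < \<delta>" and "0 \<le> t"
  shows "normM M (y t - c) \<le> normM M (y 0 - c)"
proof -
  have sym: "transpose M = M" using M unfolding sym_pos_def_def by blast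
  define V where "V s = (y s - c) \<bullet> (M *v (y s - c))" for s
  have V: "normM M (y s - c) = sqrt (V s)" for s unfolding V_def normM_def ..
  have deriv: "(V has_real_derivative 2 * ((y s - c) \<bullet> (M *v F (y s)))) (at s within {0..})"
    if "0 \<le> s" for s
    unfolding V_def using sol[OF that]
    by (intro has_real_derivative_quadratic_form[OF _ sym] derivative_eq_intros) auto
  have nonpos: "2 * ((y s - c) \<bullet> (M *v F (y s))) \<le> 0" if "0 \<le> s" "V s < \<delta>\<^sup>2" for s
  proof -
    have "0 < \<delta>" using start normM_nonneg[OF M, of "y 0 - c"] by linarith
    hence "normM M (y s - c) < \<delta>"
      using real_sqrt_less_mono[OF that(2)] by (simp add: V)
    hence "(y s - c) \<bullet> (M *v (F (y s) - F c)) \<le> - \<rho> * V s"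
      using contr \<open>c \<in> S\<close> ball[OF less_imp_le] unfolding contracting_on_def V_def by blast
    thus ?thesis
      using \<open>F c = 0\<close> mult_nonneg_nonneg[OF \<open>0 \<le> \<rho>\<close> quadratic_form_nonneg[OF M, of "y s - c"]]
      by (simp add: V_def)
  qed
  have "V 0 < \<delta>\<^sup>2"
    using normM_squared[OF M, of "y 0 - c"] start normM_nonneg[OF M]
    by (metis V_def power_strict_mono zero_less_numeral)
  from forward_invariant_sublevel[OF deriv nonpos this \<open>0 \<le> t\<close>] have "V t \<le> V 0" .
  thus ?thesis unfolding V by simp
qed

lemma contracting_on_distance_decay:
  fixes F :: "real^'d::finite \<Rightarrow> real^'d" and y z :: "real \<Rightarrow> real^'d"
  assumes M: "sym_pos_def M" and contr: "contracting_on S M \<rho> F"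
    and lip: "\<And>x x'. x \<in> S \<Longrightarrow> x' \<in> S \<Longrightarrow> norm (F x - F x') \<le> L * norm (x - x')"
    and y: "\<And>t. 0 \<le> t \<Longrightarrow> (y has_vector_derivative F (y t)) (at t within {0..}) \<and> y t \<in> S"
    and z: "\<And>t. 0 \<le> t \<Longrightarrow> (z has_vector_derivative F (z t)) (at t within {0..}) \<and> z t \<in> S"
    and "0 \<le> t"
  shows "\<exists>D. ((\<lambda>s. normM M (y s - z s)) has_real_derivative D) (at t within {0..})
    \<and> D \<le> - \<rho> * normM M (y t - z t)"
proof -
  have sym: "transpose M = M" using M unfolding sym_pos_def_def by blast
  obtain m where "m > 0" and m: "\<And>x. m * (norm x)\<^sup>2 \<le> x \<bullet> (M *v x)"
    using quadratic_form_coercive[OF M] by blast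
  define W where "W s = (y s - z s) \<bullet> (M *v (y s - z s))" for s
  define W' where "W' s = 2 * ((y s - z s) \<bullet> (M *v (F (y s) - F (z s))))" for s
  have "(W has_real_derivative W' s) (at s within {0..})" if "0 \<le> s" for s
    unfolding W_def W'_def using y[OF that] z[OF that]
    by (intro has_real_derivative_quadratic_form[OF _ sym] has_vector_derivative_diff) auto
  moreover have "W' s \<le> -2 * \<rho> * W s" if "0 \<le> s" for s
    using contr y[OF that] z[OF that] unfolding contracting_on_def W_def W'_def by auto
  moreover have "\<bar>W' s\<bar> \<le> 2 * onorm ((*v) M) * \<bar>L\<bar> / m * W s" if "0 \<le> s" for s
  proof -
    have "\<bar>W' s\<bar> \<le> 2 * (onorm ((*v) M) * norm (y s - z s) * norm (F (y s) - F (z s)))"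
      unfolding W'_def using quadratic_form_le_onorm by (simp add: abs_mult)
    also have "\<dots> \<le> 2 * (onorm ((*v) M) * norm (y s - z s) * (\<bar>L\<bar> * norm (y s - z s)))"
      using lip[of "y s" "z s"] y[OF that] z[OF that] onorm_pos_le[of "(*v) M"]
      by (intro mult_left_mono order_trans[OF _ mult_right_mono[OF abs_ge_self]]) auto
    also have "\<dots> = 2 * onorm ((*v) M) * \<bar>L\<bar> / m * (m * (norm (y s - z s))\<^sup>2)"
      using \<open>m > 0\<close> by (simp add: power2_eq_square field_simps)
    also have "\<dots> \<le> 2 * onorm ((*v) M) * \<bar>L\<bar> / m * W s"
      unfolding W_def using m \<open>m > 0\<close> onorm_pos_le[of "(*v) M"] by (intro mult_left_mono) auto
    finally show ?thesis .
  qed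
  ultimately show ?thesis
    using sqrt_deriv_le_if_quadratic_decay[of W W' \<rho> _ t] quadratic_form_nonneg[OF M] \<open>0 \<le> t\<close>
    unfolding W_def normM_def by blast
qed

lemma contracting_on_solutions_contract:
  fixes F :: "real^'d::finite \<Rightarrow> real^'d"
  assumes M: "sym_pos_def M" and contr: "contracting_on S M \<rho> F" and "0 \<le> \<rho>"
    and "c \<in> S" "F c = 0" and ball: "\<And>x. normM M (x - c) \<le> \<delta>1 \<Longrightarrow> x \<in> S" and "\<delta> < \<delta>1"
    and lip: "\<And>x x'. x \<in> S \<Longrightarrow> x' \<in> S \<Longrightarrow> norm (F x - F x') \<le> L * norm (x - x')"
  shows "\<forall>y z. (\<forall>t\<ge>0. (y has_vector_derivative F (y t)) (at t within {0..}))
      \<and> (\<forall>t\<ge>0. (z has_vector_derivative F (z t)) (at t within {0..}))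
      \<and> normM M (y 0 - c) \<le> \<delta> \<and> normM M (z 0 - c) \<le> \<delta> \<longrightarrow>
      (\<forall>t\<ge>0. \<exists>D. ((\<lambda>s. normM M (y s - z s)) has_real_derivative D) (at t within {0..})
                \<and> D \<le> - \<rho> * normM M (y t - z t))"
proof (intro allI impI)
  have stays: "y t \<in> S"
    if "\<forall>t\<ge>0. (y has_vector_derivative F (y t)) (at t within {0..})" "normM M (y 0 - c) \<le> \<delta>" "0 \<le> t"
    for y t
  proof -
    have "normM M (y t - c) \<le> normM M (y 0 - c)"
      using that \<open>\<delta> < \<delta>1\<close>
      by (intro contracting_on_solution_approaches_equilibrium[OF M contr \<open>0 \<le> \<rho>\<close> \<open>c \<in> S\<close> \<open>F c = 0\<close> ball])
        auto
    thus ?thesis using that(2) \<open>\<delta> < \<delta>1\<close> ball by simp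
  qed
  fix y z :: "real \<Rightarrow> real^'d" and t :: real
  assume "(\<forall>t\<ge>0. (y has_vector_derivative F (y t)) (at t within {0..}))
      \<and> (\<forall>t\<ge>0. (z has_vector_derivative F (z t)) (at t within {0..}))
      \<and> normM M (y 0 - c) \<le> \<delta> \<and> normM M (z 0 - c) \<le> \<delta>" "0 \<le> t"
  thus "\<exists>D. ((\<lambda>s. normM M (y s - z s)) has_real_derivative D) (at t within {0..})
      \<and> D \<le> - \<rho> * normM M (y t - z t)"
    using stays[of y] stays[of z] by (intro contracting_on_distance_decay[OF M contr lip]) auto
qed

section \<open>The generator of the scaled chain\<close>

lemma genQ_normM_le:
  fixes M :: "real^'d::finite^'d"
  assumes M: "sym_pos_def M" and "finite Js" and "N > 0"
    and nonneg: "\<And>J. J \<in> Js \<Longrightarrow> 0 \<le> r J x" and bounded: "\<And>J. J \<in> Js \<Longrightarrow> r J x \<le> R"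
    and drift: "(x - c) \<bullet> (M *v drift Js r x) \<le> - \<rho> * (normM M (x - c))\<^sup>2"
    and pos: "normM M (x - c) > 0"
  shows "genQ Js r N (\<lambda>x. normM M (x - c)) x
    \<le> - \<rho> * normM M (x - c) + R * (\<Sum>J\<in>Js. ivec J \<bullet> (M *v ivec J)) / (2 * real N * normM M (x - c))"
proof -
  let ?G = "normM M (x - c)" and ?h = "\<lambda>J. (1 / real N) *\<^sub>R ivec J"
  have "real N * r J x * (normM M (x + ?h J - c) - ?G)
      \<le> r J x * ((x - c) \<bullet> (M *v ivec J)) / ?G + r J x * (ivec J \<bullet> (M *v ivec J)) / (2 * real N * ?G)"
    if "J \<in> Js" for J
  proof -
    have shift: "x + ?h J - c = x - c + ?h J" by simp
    have "real N * r J x * (normM M (x + ?h J - c) - ?G)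
        \<le> real N * r J x * ((2 * ((x - c) \<bullet> (M *v ?h J)) + ?h J \<bullet> (M *v ?h J)) / (2 * ?G))"
      unfolding shift
      by (rule mult_left_mono[OF normM_increment_le[OF M pos]]) (use nonneg[OF that] in simp)
    also have "(x - c) \<bullet> (M *v ?h J) = ((x - c) \<bullet> (M *v ivec J)) / N"
      by (simp add: matrix_vector_mult_scaleR)
    also have "?h J \<bullet> (M *v ?h J) = (ivec J \<bullet> (M *v ivec J)) / N\<^sup>2"
      unfolding quadratic_form_scaleR by (simp add: power_divide)
    also have "real N * r J x * ((2 * (((x - c) \<bullet> (M *v ivec J)) / N) + (ivec J \<bullet> (M *v ivec J)) / N\<^sup>2) / (2 * ?G))
        = r J x * ((x - c) \<bullet> (M *v ivec J)) / ?G + r J x * (ivec J \<bullet> (M *v ivec J)) / (2 * real N * ?G)"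
      using \<open>N > 0\<close> pos by (simp add: field_simps power2_eq_square)
    finally show ?thesis .
  qed
  hence "genQ Js r N (\<lambda>x. normM M (x - c)) x
      \<le> (\<Sum>J\<in>Js. r J x * ((x - c) \<bullet> (M *v ivec J)) / ?G + r J x * (ivec J \<bullet> (M *v ivec J)) / (2 * real N * ?G))"
    unfolding genQ_def by (intro sum_mono) simp
  also have "\<dots> = ((x - c) \<bullet> (M *v drift Js r x)) / ?G
      + (\<Sum>J\<in>Js. r J x * (ivec J \<bullet> (M *v ivec J))) / (2 * real N * ?G)"
    by (simp add: drift_def sum.distrib sum_divide_distrib inner_sum_right matrix_vector_mult_scaleR
        linear_sum[OF matrix_vector_mul_linear])
  also have "\<dots> \<le> (- \<rho> * ?G\<^sup>2) / ?G + (R * (\<Sum>J\<in>Js. ivec J \<bullet> (M *v ivec J))) / (2 * real N * ?G)"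
    using drift pos \<open>N > 0\<close> bounded quadratic_form_nonneg[OF M]
    by (intro add_mono divide_right_mono)
      (auto simp: sum_distrib_left intro!: sum_mono mult_right_mono)
  finally show ?thesis using pos by (simp add: power2_eq_square)
qed

lemma error_term_absorbed:
  fixes N :: nat
  assumes "1 \<le> N" "0 < K" "0 \<le> \<kappa>" "a \<le> 2 * \<kappa> * K\<^sup>2" "K / sqrt (real N) \<le> G"
  shows "a / (2 * real N * G) \<le> \<kappa> * G"
proof -
  have "0 < K / sqrt (real N)" using assms(1,2) by simp
  hence "G > 0" using assms(5) by linarith
  have "(K / sqrt (real N))\<^sup>2 \<le> G\<^sup>2"
    using assms(5) \<open>0 < K / sqrt (real N)\<close> by (intro power_mono) auto
  hence "K\<^sup>2 \<le> N * G\<^sup>2" using assms(1) by (simp add: power_divide field_simps)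
  hence "a \<le> 2 * \<kappa> * (N * G\<^sup>2)" using assms(3,4) by (smt (verit) mult_left_mono)
  also have "\<dots> = \<kappa> * G * (2 * real N * G)" by (simp add: power2_eq_square mult_ac)
  finally show ?thesis using \<open>G > 0\<close> assms(1) by (simp add: divide_le_eq)
qed

lemma genQ_normM_contraction:
  fixes M :: "real^'d::finite^'d"
  assumes M: "sym_pos_def M" and "finite Js" and "\<rho> < \<rho>2"
    and contr: "contracting_on B M \<rho>2 (drift Js r)" and "c \<in> B" and "drift Js r c = 0"
    and ball: "\<And>x. normM M (x - c) \<le> \<delta> \<Longrightarrow> x \<in> B"
    and nonneg: "\<And>J x. J \<in> Js \<Longrightarrow> x \<in> B \<Longrightarrow> 0 \<le> r J x"
    and bounded: "\<And>J x. J \<in> Js \<Longrightarrow> x \<in> B \<Longrightarrow> r J x \<le> R"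
  shows "\<exists>K1. \<forall>N\<ge>1. \<forall>x. \<delta> \<ge> normM M (x - c) \<and> normM M (x - c) \<ge> K1 / sqrt (real N) \<longrightarrow>
    genQ Js r N (\<lambda>x. normM M (x - c)) x \<le> - \<rho> * normM M (x - c)"
proof -
  define Q where "Q = (\<Sum>J\<in>Js. ivec J \<bullet> (M *v ivec J))"
  have "0 \<le> Q" unfolding Q_def using quadratic_form_nonneg[OF M] by (simp add: sum_nonneg)
  define a where "a = \<bar>R\<bar> * Q / (2 * (\<rho>2 - \<rho>))"
  have "0 \<le> a" using \<open>0 \<le> Q\<close> \<open>\<rho> < \<rho>2\<close> by (simp add: a_def)
  define K1 where "K1 = sqrt a + 1"
  have "K1 > 0" using \<open>0 \<le> a\<close> by (simp add: K1_def add_nonneg_pos)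
  have "a \<le> K1\<^sup>2"
    using \<open>0 \<le> a\<close> power_mono[of "sqrt a" K1 2] by (simp add: K1_def)
  hence K1: "\<bar>R\<bar> * Q \<le> 2 * (\<rho>2 - \<rho>) * K1\<^sup>2"
    using \<open>\<rho> < \<rho>2\<close> by (simp add: a_def divide_le_eq mult_ac)
  show ?thesis
  proof (intro exI[of _ K1] allI impI)
    fix N :: nat and x assume "1 \<le> N"
      and x: "\<delta> \<ge> normM M (x - c) \<and> normM M (x - c) \<ge> K1 / sqrt (real N)"
    let ?G = "normM M (x - c)"
    have "x \<in> B" using ball x by blast
    have "0 < K1 / sqrt (real N)" using \<open>K1 > 0\<close> \<open>1 \<le> N\<close> by simp
    hence "?G > 0" using x by linarith
    have "(x - c) \<bullet> (M *v drift Js r x) \<le> - \<rho>2 * ?G\<^sup>2"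
      using contr \<open>x \<in> B\<close> \<open>c \<in> B\<close> \<open>drift Js r c = 0\<close> normM_squared[OF M]
      unfolding contracting_on_def by fastforce
    hence "genQ Js r N (\<lambda>x. normM M (x - c)) x \<le> - \<rho>2 * ?G + R * Q / (2 * real N * ?G)"
      unfolding Q_def using \<open>1 \<le> N\<close> \<open>x \<in> B\<close> \<open>?G > 0\<close> nonneg bounded
      by (intro genQ_normM_le[OF M \<open>finite Js\<close>]) auto
    also have "R * Q / (2 * real N * ?G) \<le> (\<rho>2 - \<rho>) * ?G"
      using \<open>1 \<le> N\<close> \<open>K1 > 0\<close> \<open>\<rho> < \<rho>2\<close> K1 x mult_right_mono[OF abs_ge_self \<open>0 \<le> Q\<close>, of R]
      by (intro error_term_absorbed) auto
    finally show "genQ Js r N (\<lambda>x. normM M (x - c)) x \<le> - \<rho> * ?G" by (simp add: algebra_simps)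
  qed
qed

section \<open>The synchronous coupling\<close>

lemma ivec_add: "ivec (U + J) = ivec U + ivec J"
  by (simp add: ivec_def Finite_Cartesian_Product.vec_eq_iff)

lemma sum_indicator_kernel:
  fixes \<alpha> :: "'j \<Rightarrow> real" and p :: "'j \<Rightarrow> 'q"
  assumes "finite A" "finite T" "\<And>j. j \<in> A \<Longrightarrow> p j \<in> T"
  shows "(\<Sum>q\<in>T. (\<Sum>j\<in>A. if q = p j then \<alpha> j else 0) * \<phi> q) = (\<Sum>j\<in>A. \<alpha> j * \<phi> (p j))"
proof -
  have "(\<Sum>q\<in>T. (\<Sum>j\<in>A. if q = p j then \<alpha> j else 0) * \<phi> q)
      = (\<Sum>j\<in>A. \<Sum>q\<in>T. if q = p j then \<alpha> j * \<phi> q else 0)"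
    by (simp add: sum_distrib_right if_distrib[of "\<lambda>x. x * \<phi> _"] sum.swap[of _ T] cong: if_cong)
  also have "\<dots> = (\<Sum>j\<in>A. \<alpha> j * \<phi> (p j))"
    using assms by (intro sum.cong refl) (simp add: sum.delta')
  finally show ?thesis .
qed

text \<open>Clipping at 0 makes the coupling kernel nonnegative on all pairs of states;
  on S_N the clipped rate is the true jump rate of X^N.\<close>
definition jump_rate :: "(int^'d::finite \<Rightarrow> real^'d \<Rightarrow> real) \<Rightarrow> nat \<Rightarrow> int^'d \<Rightarrow> int^'d \<Rightarrow> real" where
  "jump_rate r N J U = real N * max 0 (r J ((1 / real N) *\<^sub>R ivec U))"

definition sync_coupling ::
  "(int^'d::finite) set \<Rightarrow> (int^'d \<Rightarrow> real^'d \<Rightarrow> real) \<Rightarrow> nat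
   \<Rightarrow> (int^'d) \<times> (int^'d) \<Rightarrow> (int^'d) \<times> (int^'d) \<Rightarrow> real" where
  "sync_coupling Js r N p q =
     (\<Sum>J\<in>Js. if q = (fst p + J, snd p + J)
               then min (jump_rate r N J (fst p)) (jump_rate r N J (snd p)) else 0)
   + (\<Sum>J\<in>Js. if q = (fst p + J, snd p)
               then jump_rate r N J (fst p) - min (jump_rate r N J (fst p)) (jump_rate r N J (snd p)) else 0)
   + (\<Sum>J\<in>Js. if q = (fst p, snd p + J)
               then jump_rate r N J (snd p) - min (jump_rate r N J (fst p)) (jump_rate r N J (snd p)) else 0)"

lemma sync_coupling_nonneg: "0 \<le> sync_coupling Js r N p q"
  unfolding sync_coupling_def jump_rate_def
  by (intro add_nonneg_nonneg sum_nonneg) auto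

lemma sync_coupling_support:
  "{q. sync_coupling Js r N (U, V) q \<noteq> 0}
     \<subseteq> (\<lambda>J. (U + J, V + J)) ` Js \<union> (\<lambda>J. (U + J, V)) ` Js \<union> (\<lambda>J. (U, V + J)) ` Js"
proof -
  have "sync_coupling Js r N (U, V) q = 0"
    if "q \<notin> (\<lambda>J. (U + J, V + J)) ` Js \<union> (\<lambda>J. (U + J, V)) ` Js \<union> (\<lambda>J. (U, V + J)) ` Js" for q
    using that unfolding sync_coupling_def by (subst (1 2 3) sum.neutral) auto
  thus ?thesis by blast
qed

lemma finite_sync_coupling_support:
  assumes "finite Js"
  shows "finite {q. sync_coupling Js r N p q \<noteq> 0}"
  using finite_subset[OF sync_coupling_support[of Js r N "fst p" "snd p"]] assms by simp

lemma sync_coupling_weighted_sum: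
  assumes "finite Js"
  shows "(\<Sum>q\<in>{q. sync_coupling Js r N (U, V) q \<noteq> 0}. sync_coupling Js r N (U, V) q * \<phi> q)
    = (\<Sum>J\<in>Js. min (jump_rate r N J U) (jump_rate r N J V) * \<phi> (U + J, V + J)
        + (jump_rate r N J U - min (jump_rate r N J U) (jump_rate r N J V)) * \<phi> (U + J, V)
        + (jump_rate r N J V - min (jump_rate r N J U) (jump_rate r N J V)) * \<phi> (U, V + J))"
proof -
  let ?c = "sync_coupling Js r N (U, V)"
  define T where "T = (\<lambda>J. (U + J, V + J)) ` Js \<union> (\<lambda>J. (U + J, V)) ` Js \<union> (\<lambda>J. (U, V + J)) ` Js"
  have "finite T" using assms by (simp add: T_def)
  have "(\<Sum>q\<in>{q. ?c q \<noteq> 0}. ?c q * \<phi> q) = (\<Sum>q\<in>T. ?c q * \<phi> q)"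
    using sync_coupling_support[of Js r N U V] unfolding T_def[symmetric]
    by (intro sum.mono_neutral_cong_left \<open>finite T\<close>) auto
  also have "\<dots> = (\<Sum>J\<in>Js. min (jump_rate r N J U) (jump_rate r N J V) * \<phi> (U + J, V + J))
      + (\<Sum>J\<in>Js. (jump_rate r N J U - min (jump_rate r N J U) (jump_rate r N J V)) * \<phi> (U + J, V))
      + (\<Sum>J\<in>Js. (jump_rate r N J V - min (jump_rate r N J U) (jump_rate r N J V)) * \<phi> (U, V + J))"
    unfolding sync_coupling_def fst_conv snd_conv distrib_right sum.distrib
    using assms \<open>finite T\<close> by (simp add: sum_indicator_kernel T_def)
  finally show ?thesis by (simp add: sum.distrib)
qed

lemma sync_coupling_marginals:
  assumes "finite Js"
  shows "U' \<noteq> U \<Longrightarrow>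
      (\<Sum>q\<in>{q. sync_coupling Js r N (U, V) q \<noteq> 0 \<and> fst q = U'}. sync_coupling Js r N (U, V) q)
        = (\<Sum>J\<in>{J\<in>Js. U + J = U'}. jump_rate r N J U)"
    and "V' \<noteq> V \<Longrightarrow>
      (\<Sum>q\<in>{q. sync_coupling Js r N (U, V) q \<noteq> 0 \<and> snd q = V'}. sync_coupling Js r N (U, V) q)
        = (\<Sum>J\<in>{J\<in>Js. V + J = V'}. jump_rate r N J V)"
proof -
  have filter: "(\<Sum>q\<in>{q. sync_coupling Js r N (U, V) q \<noteq> 0 \<and> P q}. sync_coupling Js r N (U, V) q)
      = (\<Sum>q\<in>{q. sync_coupling Js r N (U, V) q \<noteq> 0}. sync_coupling Js r N (U, V) q * (if P q then 1 else 0))"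
    for P
  proof -
    have eq: "{q. sync_coupling Js r N (U, V) q \<noteq> 0 \<and> P q}
        = {q \<in> {q. sync_coupling Js r N (U, V) q \<noteq> 0}. P q}"
      by blast
    show ?thesis unfolding eq sum.inter_filter[OF finite_sync_coupling_support[OF assms]]
      by (intro sum.cong refl) simp
  qed
  show "U' \<noteq> U \<Longrightarrow> (\<Sum>q\<in>{q. sync_coupling Js r N (U, V) q \<noteq> 0 \<and> fst q = U'}. sync_coupling Js r N (U, V) q)
      = (\<Sum>J\<in>{J\<in>Js. U + J = U'}. jump_rate r N J U)"
    unfolding filter sync_coupling_weighted_sum[OF assms] sum.inter_filter[OF assms]
    by (intro sum.cong) auto
  show "V' \<noteq> V \<Longrightarrow> (\<Sum>q\<in>{q. sync_coupling Js r N (U, V) q \<noteq> 0 \<and> snd q = V'}. sync_coupling Js r N (U, V) q)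
      = (\<Sum>J\<in>{J\<in>Js. V + J = V'}. jump_rate r N J V)"
    unfolding filter sync_coupling_weighted_sum[OF assms] sum.inter_filter[OF assms]
    by (intro sum.cong) auto
qed

lemma is_markov_coupling_sync_coupling:
  assumes "finite Js"
    and nonneg: "\<And>J X. J \<in> Js \<Longrightarrow> X \<in> SN \<Longrightarrow> 0 \<le> r J ((1 / real N) *\<^sub>R ivec X)"
  shows "is_markov_coupling Js r N SN (sync_coupling Js r N)"
proof -
  have rate: "(\<Sum>J\<in>{J\<in>Js. X + J = X'}. jump_rate r N J X) = rateX Js r N X X'"
    if "X \<in> SN" "X' \<noteq> X" for X X'
    unfolding rateX_def using that nonneg
    by (intro sum.cong) (auto simp: jump_rate_def)
  show ?thesis
    unfolding is_markov_coupling_def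
    using sync_coupling_nonneg finite_sync_coupling_support[OF assms(1)]
      sync_coupling_marginals[OF assms(1)] rate
    by auto
qed

lemma split_jump_normM_increment_le:
  fixes M :: "real^'d::finite^'d"
  assumes M: "sym_pos_def M" and w: "normM M w > 0" and "0 \<le> a" "0 \<le> b"
  shows "(a - min a b) * (normM M (w + h) - normM M w) + (b - min a b) * (normM M (w - h) - normM M w)
    \<le> (a - b) * (w \<bullet> (M *v h)) / normM M w + \<bar>a - b\<bar> * (h \<bullet> (M *v h)) / (2 * normM M w)"
proof -
  have "(a - min a b) * (normM M (w + h) - normM M w) + (b - min a b) * (normM M (w + - h) - normM M w)
      \<le> (a - min a b) * ((2 * (w \<bullet> (M *v h)) + h \<bullet> (M *v h)) / (2 * normM M w))
        + (b - min a b) * ((2 * (w \<bullet> (M *v - h)) + - h \<bullet> (M *v - h)) / (2 * normM M w))"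
    by (intro add_mono mult_left_mono normM_increment_le[OF M w]) auto
  also have "\<dots> = ((a - min a b) - (b - min a b)) * (w \<bullet> (M *v h)) / normM M w
      + ((a - min a b) + (b - min a b)) * (h \<bullet> (M *v h)) / (2 * normM M w)"
    using w by (simp add: linear_neg[OF matrix_vector_mul_linear] field_simps)
  also have "(a - min a b) + (b - min a b) = \<bar>a - b\<bar>" by auto
  finally show ?thesis by simp
qed

lemma genA_sync_coupling_normM_le:
  fixes M :: "real^'d::finite^'d"
  assumes M: "sym_pos_def M" and "finite Js" and H: "normM M (ivec U - ivec V) > 0"
  shows "genA (sync_coupling Js r N) (\<lambda>(U', V'). normM M (ivec U' - ivec V')) (U, V)
    \<le> (\<Sum>J\<in>Js. (jump_rate r N J U - jump_rate r N J V) * ((ivec U - ivec V) \<bullet> (M *v ivec J)))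
          / normM M (ivec U - ivec V)
      + (\<Sum>J\<in>Js. \<bar>jump_rate r N J U - jump_rate r N J V\<bar> * (ivec J \<bullet> (M *v ivec J)))
          / (2 * normM M (ivec U - ivec V))"
proof -
  let ?w = "ivec U - ivec V" and ?a = "\<lambda>J. jump_rate r N J U" and ?b = "\<lambda>J. jump_rate r N J V"
  have "genA (sync_coupling Js r N) (\<lambda>(U', V'). normM M (ivec U' - ivec V')) (U, V)
      = (\<Sum>J\<in>Js. (?a J - min (?a J) (?b J)) * (normM M (?w + ivec J) - normM M ?w)
          + (?b J - min (?a J) (?b J)) * (normM M (?w - ivec J) - normM M ?w))"
    unfolding genA_def sync_coupling_weighted_sum[OF \<open>finite Js\<close>]
    by (intro sum.cong refl) (simp add: ivec_add algebra_simps)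
  also have "\<dots> \<le> (\<Sum>J\<in>Js. (?a J - ?b J) * (?w \<bullet> (M *v ivec J)) / normM M ?w
      + \<bar>?a J - ?b J\<bar> * (ivec J \<bullet> (M *v ivec J)) / (2 * normM M ?w))"
    by (intro sum_mono split_jump_normM_increment_le[OF M H]) (auto simp: jump_rate_def)
  finally show ?thesis by (simp add: sum.distrib sum_divide_distrib)
qed

lemma genA_sync_coupling_contraction_at:
  fixes M :: "real^'d::finite^'d"
  assumes M: "sym_pos_def M" and "finite Js" and "N > 0"
    and "m > 0" and m: "\<And>x. m * (norm x)\<^sup>2 \<le> x \<bullet> (M *v x)"
    and contr: "contracting_on B M \<rho> (drift Js r)"
    and lip: "\<And>J x y. J \<in> Js \<Longrightarrow> x \<in> B \<Longrightarrow> y \<in> B \<Longrightarrow> \<bar>r J x - r J y\<bar> \<le> L * norm (x - y)"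
    and u: "(1 / real N) *\<^sub>R ivec U \<in> B" and v: "(1 / real N) *\<^sub>R ivec V \<in> B"
    and nonneg: "\<And>J. J \<in> Js \<Longrightarrow> 0 \<le> r J ((1 / real N) *\<^sub>R ivec U) \<and> 0 \<le> r J ((1 / real N) *\<^sub>R ivec V)"
    and H: "normM M (ivec U - ivec V) > 0"
  shows "genA (sync_coupling Js r N) (\<lambda>(U', V'). normM M (ivec U' - ivec V')) (U, V)
    \<le> - \<rho> * normM M (ivec U - ivec V) + \<bar>L\<bar> * (\<Sum>J\<in>Js. ivec J \<bullet> (M *v ivec J)) / (2 * sqrt m)"
proof -
  let ?u = "(1 / real N) *\<^sub>R ivec U" and ?v = "(1 / real N) *\<^sub>R ivec V"
  let ?w = "ivec U - ivec V" and ?H = "normM M (ivec U - ivec V)"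
  have w: "?w = real N *\<^sub>R (?u - ?v)" using \<open>N > 0\<close> by (simp add: scaleR_diff_right)
  have rate: "jump_rate r N J U - jump_rate r N J V = real N * (r J ?u - r J ?v)" if "J \<in> Js" for J
    using nonneg[OF that] by (simp add: jump_rate_def right_diff_distrib)
  have "(\<Sum>J\<in>Js. (jump_rate r N J U - jump_rate r N J V) * (?w \<bullet> (M *v ivec J)))
      = real N * (?w \<bullet> (M *v (drift Js r ?u - drift Js r ?v)))"
    by (simp add: rate drift_def sum_distrib_left inner_sum_right linear_sum[OF matrix_vector_mul_linear]
        matrix_vector_mult_scaleR scaleR_diff_left sum_subtractf algebra_simps cong: sum.cong)
  also have "\<dots> = (real N)\<^sup>2 * ((?u - ?v) \<bullet> (M *v (drift Js r ?u - drift Js r ?v)))"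
    unfolding w by (simp add: power2_eq_square)
  also have "\<dots> \<le> (real N)\<^sup>2 * (- \<rho> * ((?u - ?v) \<bullet> (M *v (?u - ?v))))"
    using contr u v unfolding contracting_on_def by (intro mult_left_mono) auto
  also have "\<dots> = - \<rho> * ?H\<^sup>2"
    unfolding normM_squared[OF M] w quadratic_form_scaleR by simp
  finally have drift_part: "(\<Sum>J\<in>Js. (jump_rate r N J U - jump_rate r N J V) * (?w \<bullet> (M *v ivec J)))
      \<le> - \<rho> * ?H\<^sup>2" .
  have "\<bar>jump_rate r N J U - jump_rate r N J V\<bar> \<le> \<bar>L\<bar> * (?H / sqrt m)" if "J \<in> Js" for J
  proof -
    have "\<bar>r J ?u - r J ?v\<bar> \<le> \<bar>L\<bar> * norm (?u - ?v)"
      using order_trans[OF lip[OF that u v] mult_right_mono[OF abs_ge_self norm_ge_zero]] .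
    hence "\<bar>jump_rate r N J U - jump_rate r N J V\<bar> \<le> real N * (\<bar>L\<bar> * norm (?u - ?v))"
      unfolding rate[OF that] abs_mult by (simp add: mult_left_mono)
    also have "\<dots> = \<bar>L\<bar> * norm ?w" unfolding w by simp
    also have "\<dots> \<le> \<bar>L\<bar> * (?H / sqrt m)" by (intro mult_left_mono norm_le_normM[OF \<open>m > 0\<close> m]) auto
    finally show ?thesis .
  qed
  hence noise_part: "(\<Sum>J\<in>Js. \<bar>jump_rate r N J U - jump_rate r N J V\<bar> * (ivec J \<bullet> (M *v ivec J)))
      \<le> \<bar>L\<bar> * (?H / sqrt m) * (\<Sum>J\<in>Js. ivec J \<bullet> (M *v ivec J))"
    unfolding sum_distrib_left using quadratic_form_nonneg[OF M] by (intro sum_mono mult_right_mono) auto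
  have "genA (sync_coupling Js r N) (\<lambda>(U', V'). normM M (ivec U' - ivec V')) (U, V)
      \<le> (- \<rho> * ?H\<^sup>2) / ?H + (\<bar>L\<bar> * (?H / sqrt m) * (\<Sum>J\<in>Js. ivec J \<bullet> (M *v ivec J))) / (2 * ?H)"
    using genA_sync_coupling_normM_le[OF M \<open>finite Js\<close> H, of r N] drift_part noise_part H
    by (smt (verit) divide_right_mono zero_le_mult_iff)
  also have "\<dots> = - \<rho> * ?H + \<bar>L\<bar> * (\<Sum>J\<in>Js. ivec J \<bullet> (M *v ivec J)) / (2 * sqrt m)"
    using H \<open>m > 0\<close> by (simp add: power2_eq_square field_simps)
  finally show ?thesis .
qed

lemma normM_scaled_lattice_le:
  fixes M :: "real^'d::finite^'d"
  assumes "N > 0" "normM M (ivec X - real N *\<^sub>R c) \<le> real N * \<delta>"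
  shows "normM M ((1 / real N) *\<^sub>R ivec X - c) \<le> \<delta>"
proof -
  have "ivec X - real N *\<^sub>R c = real N *\<^sub>R ((1 / real N) *\<^sub>R ivec X - c)"
    using assms(1) by (simp add: scaleR_diff_right)
  thus ?thesis using assms normM_scaleR[of M "real N"] by simp
qed

lemma sync_coupling_contraction:
  fixes M :: "real^'d::finite^'d" and S :: "nat \<Rightarrow> (int^'d) set"
  assumes M: "sym_pos_def M" and "finite Js" and "\<rho> < \<rho>2"
    and contr: "contracting_on B M \<rho>2 (drift Js r)"
    and ball: "\<And>x. normM M (x - c) \<le> \<delta> \<Longrightarrow> x \<in> B"
    and lip: "\<And>J x y. J \<in> Js \<Longrightarrow> x \<in> B \<Longrightarrow> y \<in> B \<Longrightarrow> \<bar>r J x - r J y\<bar> \<le> L * norm (x - y)"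
    and nonneg: "\<And>N J X. 1 \<le> N \<Longrightarrow> J \<in> Js \<Longrightarrow> X \<in> S N \<Longrightarrow> 0 \<le> r J ((1 / real N) *\<^sub>R ivec X)"
  shows "\<exists>K2. \<forall>N\<ge>1. \<exists>cq. is_markov_coupling Js r N (S N) cq \<and>
          (\<forall>U\<in>S N. \<forall>V\<in>S N.
             normM M (ivec U - real N *\<^sub>R c) \<le> real N * \<delta> \<and>
             normM M (ivec V - real N *\<^sub>R c) \<le> real N * \<delta> \<and>
             normM M (ivec U - ivec V) \<ge> K2 \<longrightarrow>
             genA cq (\<lambda>(U', V'). normM M (ivec U' - ivec V')) (U, V)
               \<le> - \<rho> * normM M (ivec U - ivec V))"
proof -
  obtain m where "m > 0" and m: "\<And>x. m * (norm x)\<^sup>2 \<le> x \<bullet> (M *v x)"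
    using quadratic_form_coercive[OF M] by blast
  define C where "C = \<bar>L\<bar> * (\<Sum>J\<in>Js. ivec J \<bullet> (M *v ivec J)) / (2 * sqrt m)"
  have "0 \<le> C" using \<open>m > 0\<close> quadratic_form_nonneg[OF M] by (simp add: C_def sum_nonneg)
  define K2 where "K2 = C / (\<rho>2 - \<rho>) + 1"
  have "K2 > 0" using \<open>0 \<le> C\<close> \<open>\<rho> < \<rho>2\<close> by (simp add: K2_def add_nonneg_pos)
  show ?thesis
  proof (intro exI[of _ K2] allI impI)
    fix N :: nat assume "1 \<le> N"
    have "genA (sync_coupling Js r N) (\<lambda>(U', V'). normM M (ivec U' - ivec V')) (U, V)
        \<le> - \<rho> * normM M (ivec U - ivec V)"
      if "U \<in> S N" "V \<in> S N" and near: "normM M (ivec U - real N *\<^sub>R c) \<le> real N * \<delta>"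
        "normM M (ivec V - real N *\<^sub>R c) \<le> real N * \<delta>" and far: "normM M (ivec U - ivec V) \<ge> K2"
      for U V
    proof -
      have "genA (sync_coupling Js r N) (\<lambda>(U', V'). normM M (ivec U' - ivec V')) (U, V)
          \<le> - \<rho>2 * normM M (ivec U - ivec V) + C"
        unfolding C_def using \<open>1 \<le> N\<close> that far \<open>K2 > 0\<close> \<open>m > 0\<close> m nonneg
          ball[OF normM_scaled_lattice_le[OF _ near(1)]] ball[OF normM_scaled_lattice_le[OF _ near(2)]]
        by (intro genA_sync_coupling_contraction_at[OF M \<open>finite Js\<close> _ _ _ contr lip]) auto
      also have "C \<le> (\<rho>2 - \<rho>) * normM M (ivec U - ivec V)"
        using far \<open>\<rho> < \<rho>2\<close> by (simp add: K2_def field_simps)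
      finally show ?thesis by (simp add: algebra_simps)
    qed
    thus "\<exists>cq. is_markov_coupling Js r N (S N) cq \<and>
          (\<forall>U\<in>S N. \<forall>V\<in>S N.
             normM M (ivec U - real N *\<^sub>R c) \<le> real N * \<delta> \<and>
             normM M (ivec V - real N *\<^sub>R c) \<le> real N * \<delta> \<and>
             normM M (ivec U - ivec V) \<ge> K2 \<longrightarrow>
             genA cq (\<lambda>(U', V'). normM M (ivec U' - ivec V')) (U, V)
               \<le> - \<rho> * normM M (ivec U - ivec V))"
      using is_markov_coupling_sync_coupling[where r = r and N = N and SN = "S N",
          OF \<open>finite Js\<close> nonneg[OF \<open>1 \<le> N\<close>]] by blast
  qed
qed

theorem theorem2p3:
  fixes Js :: "(int^'d::finite) set"
    and r :: "int^'d \<Rightarrow> real^'d \<Rightarrow> real"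
    and g :: "int^'d \<Rightarrow> real^'d \<Rightarrow> real^'d"
    and S :: "nat \<Rightarrow> (int^'d) set"
    and Shat :: "(real^'d) set"
    and c :: "real^'d"
    and \<rho> :: real
  assumes Shat_closed: "closed Shat"
    and S_scaled: "\<forall>N\<ge>1. \<forall>X\<in>S N. (1 / real N) *\<^sub>R ivec X \<in> Shat"
    and S_jumps: "\<forall>N\<ge>1. \<forall>X\<in>S N. \<forall>J\<in>Js. r J ((1 / real N) *\<^sub>R ivec X) > 0 \<longrightarrow> X + J \<in> S N"
    and A1_finite: "finite Js"
    and A1_nonneg: "\<forall>J\<in>Js. \<forall>x\<in>Shat. r J x \<ge> 0"
    and A1_deriv: "\<forall>J\<in>Js. \<forall>x\<in>Shat. (r J has_derivative (\<lambda>v. g J x \<bullet> v)) (at x within Shat)"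
    and A1_cont: "\<forall>J\<in>Js. continuous_on Shat (g J)"
    and A2: "\<forall>v::int^'d. \<exists>xs. set xs \<subseteq> Js \<and> v = sum_list xs"
    and A3_c: "c \<in> interior Shat"
    and A3_eq: "drift Js r c = 0"
    and A3_pos: "\<forall>J\<in>Js. r J c > 0"
    and A3_rho: "\<rho> > 0"
    and A3_eig: "\<forall>lam. complex_eigenvalue (matA Js g c) lam \<longrightarrow> Re lam < - \<rho>"
  shows "\<exists>M \<delta>0. sym_pos_def M \<and> \<delta>0 > 0 \<and>
    (\<forall>y. (\<forall>t\<ge>0. y t \<in> Shat \<and> (y has_vector_derivative drift Js r (y t)) (at t within {0..}))
        \<and> normM M (y 0 - c) \<le> \<delta>0 \<longrightarrow>
        (\<forall>t\<ge>0. \<exists>D. ((\<lambda>s. normM M (y s - c)) has_real_derivative D) (at t within {0..})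
                  \<and> D \<le> - \<rho> * normM M (y t - c))) \<and>
    (\<forall>y z. (\<forall>t\<ge>0. y t \<in> Shat \<and> (y has_vector_derivative drift Js r (y t)) (at t within {0..}))
        \<and> (\<forall>t\<ge>0. z t \<in> Shat \<and> (z has_vector_derivative drift Js r (z t)) (at t within {0..}))
        \<and> normM M (y 0 - c) \<le> \<delta>0 \<and> normM M (z 0 - c) \<le> \<delta>0 \<longrightarrow>
        (\<forall>t\<ge>0. \<exists>D. ((\<lambda>s. normM M (y s - z s)) has_real_derivative D) (at t within {0..})
                  \<and> D \<le> - \<rho> * normM M (y t - z t))) \<and>
    (\<exists>K1 K2. \<exists>N0::nat. \<forall>N\<ge>N0.
       (\<forall>X\<in>S N. \<delta>0 \<ge> normM M ((1 / real N) *\<^sub>R ivec X - c)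
                 \<and> normM M ((1 / real N) *\<^sub>R ivec X - c) \<ge> K1 / sqrt (real N) \<longrightarrow>
          genQ Js r N (\<lambda>x. normM M (x - c)) ((1 / real N) *\<^sub>R ivec X)
            \<le> - \<rho> * normM M ((1 / real N) *\<^sub>R ivec X - c)) \<and>
       (\<exists>cq. is_markov_coupling Js r N (S N) cq \<and>
          (\<forall>U\<in>S N. \<forall>V\<in>S N.
             normM M (ivec U - real N *\<^sub>R c) \<le> real N * \<delta>0 \<and>
             normM M (ivec V - real N *\<^sub>R c) \<le> real N * \<delta>0 \<and>
             normM M (ivec U - ivec V) \<ge> K2 \<longrightarrow>
             genA cq (\<lambda>(U', V'). normM M (ivec U' - ivec V')) (U, V)
               \<le> - \<rho> * normM M (ivec U - ivec V))))"
proof -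
  interpret smooth_rates Js r g Shat
    using A1_finite A1_deriv A1_cont by unfold_locales auto
  obtain M \<rho>1 where M: "sym_pos_def M" and "\<rho> < \<rho>1"
    and lyap: "\<And>x. x \<bullet> (M *v (matA Js g c *v x)) \<le> - \<rho>1 * (x \<bullet> (M *v x))"
    using lyapunov_matrix_exists[OF A3_eig] by blast
  obtain \<rho>2 where "\<rho> < \<rho>2" "\<rho>2 < \<rho>1" using dense[OF \<open>\<rho> < \<rho>1\<close>] by blast
  obtain e where "e > 0" "cball c e \<subseteq> Shat" and contr: "contracting_on (cball c e) M \<rho>2 (drift Js r)"
    using drift_contracting_near[OF M A3_c lyap \<open>\<rho>2 < \<rho>1\<close>] by blast
  have "c \<in> cball c e" and nonneg_near: "\<And>J x. J \<in> Js \<Longrightarrow> x \<in> cball c e \<Longrightarrow> 0 \<le> r J x"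
    using \<open>e > 0\<close> \<open>cball c e \<subseteq> Shat\<close> A1_nonneg by auto
  obtain L where lip: "\<And>J x y. J \<in> Js \<Longrightarrow> x \<in> cball c e \<Longrightarrow> y \<in> cball c e \<Longrightarrow>
      \<bar>r J x - r J y\<bar> \<le> L * norm (x - y)"
    using rates_lipschitz_on[of "cball c e"] \<open>cball c e \<subseteq> Shat\<close> by auto
  obtain R where bounded: "\<And>J x. J \<in> Js \<Longrightarrow> x \<in> cball c e \<Longrightarrow> r J x \<le> R"
    using rates_bounded_on[of "cball c e"] \<open>cball c e \<subseteq> Shat\<close> by auto
  obtain \<delta>1 where "\<delta>1 > 0" and ball: "\<And>x. normM M (x - c) \<le> \<delta>1 \<Longrightarrow> x \<in> cball c e"
    using normM_ball_subset_cball[OF M \<open>e > 0\<close>] by blast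
  have "\<delta>1 / 2 < \<delta>1" and near: "\<And>x. normM M (x - c) \<le> \<delta>1 / 2 \<Longrightarrow> x \<in> cball c e"
    using ball \<open>\<delta>1 > 0\<close> by auto
  note ode = contracting_on_solutions_contract[OF M contracting_on_mono[OF M contr less_imp_le[OF \<open>\<rho> < \<rho>2\<close>]]
      less_imp_le[OF A3_rho] \<open>c \<in> cball c e\<close> A3_eq ball \<open>\<delta>1 / 2 < \<delta>1\<close>
      drift_lipschitz_if_rates_lipschitz[OF A1_finite lip]]
  have const: "((\<lambda>s. c) has_vector_derivative drift Js r c) (at t within {0..})" for t
    using A3_eq by (simp add: has_vector_derivative_const)
  have "normM M (c - c) \<le> \<delta>1 / 2" using \<open>\<delta>1 > 0\<close> by (simp add: normM_def)
  have nonneg: "\<And>N J X. 1 \<le> N \<Longrightarrow> J \<in> Js \<Longrightarrow> X \<in> S N \<Longrightarrow> 0 \<le> r J ((1 / real N) *\<^sub>R ivec X)"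
    using A1_nonneg S_scaled by blast
  obtain K2 where K2: "\<forall>N\<ge>1. \<exists>cq. is_markov_coupling Js r N (S N) cq \<and>
      (\<forall>U\<in>S N. \<forall>V\<in>S N. normM M (ivec U - real N *\<^sub>R c) \<le> real N * (\<delta>1 / 2) \<and>
         normM M (ivec V - real N *\<^sub>R c) \<le> real N * (\<delta>1 / 2) \<and> normM M (ivec U - ivec V) \<ge> K2 \<longrightarrow>
         genA cq (\<lambda>(U', V'). normM M (ivec U' - ivec V')) (U, V) \<le> - \<rho> * normM M (ivec U - ivec V))"
    using sync_coupling_contraction[where S = S, OF M A1_finite \<open>\<rho> < \<rho>2\<close> contr near lip nonneg] by blast
  obtain K1 where K1: "\<forall>N\<ge>1. \<forall>x. \<delta>1 / 2 \<ge> normM M (x - c) \<and> normM M (x - c) \<ge> K1 / sqrt (real N)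
      \<longrightarrow> genQ Js r N (\<lambda>x. normM M (x - c)) x \<le> - \<rho> * normM M (x - c)"
    using genQ_normM_contraction[OF M A1_finite \<open>\<rho> < \<rho>2\<close> contr \<open>c \<in> cball c e\<close> A3_eq near
        nonneg_near bounded] by blast
  show ?thesis
    apply (rule exI[of _ M], rule exI[of _ "\<delta>1 / 2"], intro conjI)
    subgoal by (rule M)
    subgoal using \<open>\<delta>1 > 0\<close> by simp
    subgoal using ode[THEN spec, THEN spec[where x = "\<lambda>s. c"]] const \<open>normM M (c - c) \<le> \<delta>1 / 2\<close>
      by blast
    subgoal using ode by blast
    subgoal
      apply (rule exI[of _ K1], rule exI[of _ K2], rule exI[of _ "1 :: nat"], intro allI impI conjI ballI)
      subgoal using K1 by blast
      subgoal by (rule K2[rule_format])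
      done
    done
qed

end
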